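(* Let $f\colon A\to B$, $a\colon A\to A$ and $b\colon B\to B$ be morphisms in a pre-Hilbert $*$-category with $a\succ 0$ and $b\succ 0$. Then \[ f^*b^{-1}f\leq a \iff fa^{-1}f^*\leq b \qquad\text{and}\qquad f^*b^{-1}f\prec a \iff fa^{-1}f^*\prec b. \]
   Context: A $*$-category is a category with a choice of $f^*\colon Y\to X$ for each $f\colon X\to Y$ such that $1^*=1$, $(gf)^*=f^*g^*$, $(f^* )^*=f$. A pre-Hilbert $*$-category is a $*$-category with (R1) a zero object, (R2) orthonormal biproducts of all pairs of objects (biproducts $(X,s_1,r_1,s_2,r_2)$ with $r_k=s_k^*$), (R3) an isometric kernel (kernel $m$ with $m^*m=1$) for every morphism, and (R4) every diagonal $\Delta\colon X\to X\oplus X$ a kernel of some morphism; such a category is additive. For Hermitian endomorphisms ($c^*=c$) $c,d$ of an object $A$, $c\leq d$ means $d-c=y^*y$ for some object $Y$ and $y\colon A\to Y$; $c\prec d$ (also written $d\succ c$) means $c\leq d$ and $d-c$ is invertible. *)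

theory Defs
  imports Main
begin

text \<open>A (small-or-large) category presented by a set of objects, a set of arrows,
  domain/codomain maps, a (partial) composition, identities, and a dagger (star).
  Cmp C g f is the composite g after f.\<close>

record ('o, 'm) starcat =
  Ob   :: "'o set"
  Ar   :: "'m set"
  Dom  :: "'m \<Rightarrow> 'o"
  Cod  :: "'m \<Rightarrow> 'o"
  Cmp  :: "'m \<Rightarrow> 'm \<Rightarrow> 'm"
  Idm  :: "'o \<Rightarrow> 'm"
  Star :: "'m \<Rightarrow> 'm"

definition hom :: "('o, 'm) starcat \<Rightarrow> 'o \<Rightarrow> 'o \<Rightarrow> 'm set" where
  "hom C X Y = {f \<in> Ar C. Dom C f = X \<and> Cod C f = Y}"

definition category :: "('o, 'm) starcat \<Rightarrow> bool" where
  "category C \<longleftrightarrow>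
     (\<forall>f \<in> Ar C. Dom C f \<in> Ob C \<and> Cod C f \<in> Ob C) \<and>
     (\<forall>X \<in> Ob C. Idm C X \<in> hom C X X) \<and>
     (\<forall>X \<in> Ob C. \<forall>Y \<in> Ob C. \<forall>Z \<in> Ob C. \<forall>f \<in> hom C X Y. \<forall>g \<in> hom C Y Z.
        Cmp C g f \<in> hom C X Z) \<and>
     (\<forall>W \<in> Ob C. \<forall>X \<in> Ob C. \<forall>Y \<in> Ob C. \<forall>Z \<in> Ob C.
        \<forall>f \<in> hom C W X. \<forall>g \<in> hom C X Y. \<forall>h \<in> hom C Y Z.
        Cmp C h (Cmp C g f) = Cmp C (Cmp C h g) f) \<and>
     (\<forall>X \<in> Ob C. \<forall>Y \<in> Ob C. \<forall>f \<in> hom C X Y.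
        Cmp C f (Idm C X) = f \<and> Cmp C (Idm C Y) f = f)"

definition star_category :: "('o, 'm) starcat \<Rightarrow> bool" where
  "star_category C \<longleftrightarrow> category C \<and>
     (\<forall>X \<in> Ob C. \<forall>Y \<in> Ob C. \<forall>f \<in> hom C X Y. Star C f \<in> hom C Y X) \<and>
     (\<forall>X \<in> Ob C. Star C (Idm C X) = Idm C X) \<and>
     (\<forall>X \<in> Ob C. \<forall>Y \<in> Ob C. \<forall>Z \<in> Ob C. \<forall>f \<in> hom C X Y. \<forall>g \<in> hom C Y Z.
        Star C (Cmp C g f) = Cmp C (Star C f) (Star C g)) \<and>
     (\<forall>f \<in> Ar C. Star C (Star C f) = f)"

definition zero_object :: "('o, 'm) starcat \<Rightarrow> 'o \<Rightarrow> bool" where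
  "zero_object C Z \<longleftrightarrow> Z \<in> Ob C \<and>
     (\<forall>X \<in> Ob C. (\<exists>!f. f \<in> hom C X Z) \<and> (\<exists>!f. f \<in> hom C Z X))"

definition zero_mor :: "('o, 'm) starcat \<Rightarrow> 'o \<Rightarrow> 'o \<Rightarrow> 'm" where
  "zero_mor C X Y = (THE h. \<exists>Z u v. zero_object C Z \<and> u \<in> hom C X Z \<and> v \<in> hom C Z Y
                                  \<and> h = Cmp C v u)"

definition is_biproduct ::
  "('o, 'm) starcat \<Rightarrow> 'o \<Rightarrow> 'o \<Rightarrow> 'o \<Rightarrow> 'm \<Rightarrow> 'm \<Rightarrow> 'm \<Rightarrow> 'm \<Rightarrow> bool" where
  "is_biproduct C X1 X2 P s1 r1 s2 r2 \<longleftrightarrow>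
     P \<in> Ob C \<and> s1 \<in> hom C X1 P \<and> r1 \<in> hom C P X1 \<and> s2 \<in> hom C X2 P \<and> r2 \<in> hom C P X2 \<and>
     Cmp C r1 s1 = Idm C X1 \<and> Cmp C r2 s2 = Idm C X2 \<and>
     Cmp C r2 s1 = zero_mor C X1 X2 \<and> Cmp C r1 s2 = zero_mor C X2 X1 \<and>
     (\<forall>W \<in> Ob C. \<forall>g1 \<in> hom C W X1. \<forall>g2 \<in> hom C W X2.
        \<exists>!m. m \<in> hom C W P \<and> Cmp C r1 m = g1 \<and> Cmp C r2 m = g2) \<and>
     (\<forall>W \<in> Ob C. \<forall>g1 \<in> hom C X1 W. \<forall>g2 \<in> hom C X2 W.
        \<exists>!m. m \<in> hom C P W \<and> Cmp C m s1 = g1 \<and> Cmp C m s2 = g2)"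

definition is_orthonormal_biproduct ::
  "('o, 'm) starcat \<Rightarrow> 'o \<Rightarrow> 'o \<Rightarrow> 'o \<Rightarrow> 'm \<Rightarrow> 'm \<Rightarrow> 'm \<Rightarrow> 'm \<Rightarrow> bool" where
  "is_orthonormal_biproduct C X1 X2 P s1 r1 s2 r2 \<longleftrightarrow>
     is_biproduct C X1 X2 P s1 r1 s2 r2 \<and> r1 = Star C s1 \<and> r2 = Star C s2"

definition is_kernel :: "('o, 'm) starcat \<Rightarrow> 'm \<Rightarrow> 'm \<Rightarrow> bool" where
  "is_kernel C f m \<longleftrightarrow> f \<in> Ar C \<and> m \<in> Ar C \<and> Cod C m = Dom C f \<and>
     Cmp C f m = zero_mor C (Dom C m) (Cod C f) \<and>
     (\<forall>X \<in> Ob C. \<forall>g \<in> hom C X (Dom C f).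
        Cmp C f g = zero_mor C X (Cod C f) \<longrightarrow> (\<exists>!h. h \<in> hom C X (Dom C m) \<and> Cmp C m h = g))"

definition pre_hilbert :: "('o, 'm) starcat \<Rightarrow> bool" where
  "pre_hilbert C \<longleftrightarrow> star_category C \<and>
     (\<exists>Z. zero_object C Z) \<and>
     (\<forall>X1 \<in> Ob C. \<forall>X2 \<in> Ob C. \<exists>P s1 r1 s2 r2. is_orthonormal_biproduct C X1 X2 P s1 r1 s2 r2) \<and>
     (\<forall>f \<in> Ar C. \<exists>m. is_kernel C f m \<and> Cmp C (Star C m) m = Idm C (Dom C m)) \<and>
     (\<forall>X \<in> Ob C. \<forall>P s1 r1 s2 r2 d. is_orthonormal_biproduct C X X P s1 r1 s2 r2 \<and>
        d \<in> hom C X P \<and> Cmp C r1 d = Idm C X \<and> Cmp C r2 d = Idm C X \<longrightarrow>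
        (\<exists>g. g \<in> Ar C \<and> is_kernel C g d))"

text \<open>h = f + g for f, g : A \<rightarrow> B, with the addition induced by biproducts:
  f + g = \<nabla> \<circ> \<langle>f, g\<rangle> (independent of the chosen biproduct).\<close>
definition mor_sum :: "('o, 'm) starcat \<Rightarrow> 'm \<Rightarrow> 'm \<Rightarrow> 'm \<Rightarrow> bool" where
  "mor_sum C f g h \<longleftrightarrow> (\<exists>A B. A \<in> Ob C \<and> B \<in> Ob C \<and> f \<in> hom C A B \<and> g \<in> hom C A B \<and>
     (\<exists>Q j1 q1 j2 q2 m n. is_biproduct C B B Q j1 q1 j2 q2 \<and>
        m \<in> hom C A Q \<and> n \<in> hom C Q B \<and>
        Cmp C q1 m = f \<and> Cmp C q2 m = g \<and> Cmp C n j1 = Idm C B \<and> Cmp C n j2 = Idm C B \<and>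
        h = Cmp C n m))"

definition hermitian :: "('o, 'm) starcat \<Rightarrow> 'm \<Rightarrow> bool" where
  "hermitian C c \<longleftrightarrow> (\<exists>A \<in> Ob C. c \<in> hom C A A) \<and> Star C c = c"

definition invertible :: "('o, 'm) starcat \<Rightarrow> 'm \<Rightarrow> bool" where
  "invertible C e \<longleftrightarrow> (\<exists>A B g. e \<in> hom C A B \<and> g \<in> hom C B A \<and>
     Cmp C g e = Idm C A \<and> Cmp C e g = Idm C B)"

definition inverse_mor :: "('o, 'm) starcat \<Rightarrow> 'm \<Rightarrow> 'm" where
  "inverse_mor C e = (THE g. \<exists>A B. e \<in> hom C A B \<and> g \<in> hom C B A \<and>
     Cmp C g e = Idm C A \<and> Cmp C e g = Idm C B)"

definition herm_le :: "('o, 'm) starcat \<Rightarrow> 'm \<Rightarrow> 'm \<Rightarrow> bool" where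
  "herm_le C c d \<longleftrightarrow> hermitian C c \<and> hermitian C d \<and> Dom C c = Dom C d \<and>
     (\<exists>Y \<in> Ob C. \<exists>y \<in> hom C (Dom C c) Y. mor_sum C c (Cmp C (Star C y) y) d)"

definition herm_less :: "('o, 'm) starcat \<Rightarrow> 'm \<Rightarrow> 'm \<Rightarrow> bool" where
  "herm_less C c d \<longleftrightarrow> herm_le C c d \<and> (\<exists>e. mor_sum C c e d \<and> invertible C e)"

end

theory Submission
  imports Defs
begin

text \<open>
  Both equivalences follow from one implication, applied to \<open>(f, a, b)\<close> and to \<open>(f\<^sup>\<dagger>, b, a)\<close>.

  For \<open>\<le>\<close>: write \<open>b = w\<^sup>\<dagger> w\<close> and \<open>a = f\<^sup>\<dagger> b\<^sup>-\<^sup>1 f + y\<^sup>\<dagger> y\<close>. The morphisms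
  \<open>Z\<^sub>1 = (y, w b\<^sup>-\<^sup>1 f)\<close> and \<open>Z\<^sub>2 = (0, w)\<close> into \<open>Y \<oplus> W\<close> have Gram matrix
  \<open>[[a, f\<^sup>\<dagger>], [f, b]]\<close>, so the Schur complement \<open>b - f a\<^sup>-\<^sup>1 f\<^sup>\<dagger>\<close> is \<open>z\<^sup>\<dagger> z\<close> for
  \<open>z = Z\<^sub>2 - Z\<^sub>1 a\<^sup>-\<^sup>1 f\<^sup>\<dagger>\<close>. For \<open>\<prec>\<close>: if moreover \<open>a - f\<^sup>\<dagger> b\<^sup>-\<^sup>1 f = p\<close> is invertible,
  the Woodbury identity exhibits \<open>b\<^sup>-\<^sup>1 + b\<^sup>-\<^sup>1 f p\<^sup>-\<^sup>1 f\<^sup>\<dagger> b\<^sup>-\<^sup>1\<close> as a right inverse of the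
  Hermitian \<open>b - f a\<^sup>-\<^sup>1 f\<^sup>\<dagger>\<close>, hence as its inverse.

  Subtraction is not part of the structure: the hom-sets are commutative monoids under the
  biproduct sum, and they are groups because the identity of \<open>X \<oplus> X\<close> splits as the sum of
  the projections onto an isometric copy of the diagonal (a kernel by axiom R4) and onto
  its orthogonal complement, whose off-diagonal entry yields \<open>-1\<close>.
\<close>

locale pre_hilbert_category =
  fixes C :: "('o, 'm) starcat"
  assumes pre_hilbert: "pre_hilbert C"
begin

abbreviation comp (infixr "\<cdot>" 70) where "g \<cdot> f \<equiv> Cmp C g f"
abbreviation dagger ("_\<^sup>\<dagger>" [1000] 1000) where "f\<^sup>\<dagger> \<equiv> Star C f"

lemma star_category: "star_category C"
  using pre_hilbert unfolding pre_hilbert_def by blast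

lemma category: "category C"
  using star_category unfolding star_category_def by blast

lemma in_hom_iff: "f \<in> hom C X Y \<longleftrightarrow> f \<in> Ar C \<and> Dom C f = X \<and> Cod C f = Y"
  unfolding hom_def by auto

lemma dom_ob [simp]: "f \<in> Ar C \<Longrightarrow> Dom C f \<in> Ob C"
  and cod_ob [simp]: "f \<in> Ar C \<Longrightarrow> Cod C f \<in> Ob C"
  using category unfolding category_def by blast+

lemma hom_obs: "f \<in> hom C X Y \<Longrightarrow> X \<in> Ob C" "f \<in> hom C X Y \<Longrightarrow> Y \<in> Ob C"
  unfolding in_hom_iff by auto

lemma arr_in_hom: "f \<in> Ar C \<Longrightarrow> f \<in> hom C (Dom C f) (Cod C f)"
  by (simp add: in_hom_iff)

lemma comp_in_hom: "f \<in> hom C X Y \<Longrightarrow> g \<in> hom C Y Z \<Longrightarrow> g \<cdot> f \<in> hom C X Z"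
  using category unfolding category_def by (meson hom_obs)

lemma comp_simps [simp]:
  assumes "f \<in> Ar C" "g \<in> Ar C" "Cod C f = Dom C g"
  shows "g \<cdot> f \<in> Ar C" "Dom C (g \<cdot> f) = Dom C f" "Cod C (g \<cdot> f) = Cod C g"
  using comp_in_hom[OF arr_in_hom[OF assms(1)], of g "Cod C g"] assms
  by (simp_all add: in_hom_iff)

lemma comp_assoc [simp]:
  assumes "f \<in> Ar C" "g \<in> Ar C" "h \<in> Ar C" "Cod C f = Dom C g" "Cod C g = Dom C h"
  shows "(h \<cdot> g) \<cdot> f = h \<cdot> g \<cdot> f"
proof -
  have "\<forall>W \<in> Ob C. \<forall>X \<in> Ob C. \<forall>Y \<in> Ob C. \<forall>Z \<in> Ob C.
      \<forall>f \<in> hom C W X. \<forall>g \<in> hom C X Y. \<forall>h \<in> hom C Y Z. h \<cdot> g \<cdot> f = (h \<cdot> g) \<cdot> f"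
    using category unfolding category_def by blast
  then show ?thesis
    using assms by (metis arr_in_hom cod_ob dom_ob)
qed

lemma id_in_hom: "X \<in> Ob C \<Longrightarrow> Idm C X \<in> hom C X X"
  using category unfolding category_def by blast

lemma id_simps [simp]:
  assumes "X \<in> Ob C"
  shows "Idm C X \<in> Ar C" "Dom C (Idm C X) = X" "Cod C (Idm C X) = X"
  using id_in_hom[OF assms] by (simp_all add: in_hom_iff)

lemma comp_id_left [simp]: "f \<in> Ar C \<Longrightarrow> Cod C f = Y \<Longrightarrow> Idm C Y \<cdot> f = f"
  and comp_id_right [simp]: "f \<in> Ar C \<Longrightarrow> Dom C f = X \<Longrightarrow> f \<cdot> Idm C X = f"
  using category unfolding category_def by (metis arr_in_hom cod_ob dom_ob)+

lemma star_in_hom: "f \<in> hom C X Y \<Longrightarrow> f\<^sup>\<dagger> \<in> hom C Y X"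
  using star_category unfolding star_category_def by (meson hom_obs)

lemma star_simps [simp]:
  assumes "f \<in> Ar C"
  shows "f\<^sup>\<dagger> \<in> Ar C" "Dom C (f\<^sup>\<dagger>) = Cod C f" "Cod C (f\<^sup>\<dagger>) = Dom C f"
  using star_in_hom[OF arr_in_hom[OF assms]] by (simp_all add: in_hom_iff)

lemma star_star [simp]: "f \<in> Ar C \<Longrightarrow> f\<^sup>\<dagger>\<^sup>\<dagger> = f"
  using star_category unfolding star_category_def by blast

lemma star_id [simp]: "X \<in> Ob C \<Longrightarrow> (Idm C X)\<^sup>\<dagger> = Idm C X"
  using star_category unfolding star_category_def by blast

lemma star_comp [simp]:
  assumes "f \<in> Ar C" "g \<in> Ar C" "Cod C f = Dom C g"
  shows "(g \<cdot> f)\<^sup>\<dagger> = f\<^sup>\<dagger> \<cdot> g\<^sup>\<dagger>"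
  using star_category assms unfolding star_category_def by (metis arr_in_hom cod_ob dom_ob)

text \<open>Composites are kept right-associated by the simplifier; this applies a known
  equation \<open>u \<cdot> v = w\<close> inside such a composite.\<close>
lemma comp_reduce:
  assumes "u \<cdot> v = w" "v \<in> hom C X Y" "u \<in> hom C Y Z" "x \<in> Ar C" "Cod C x = X"
  shows "u \<cdot> v \<cdot> x = w \<cdot> x"
  using assms comp_assoc[of x v u] by (simp add: in_hom_iff)

subsection \<open>Zero morphisms and biproducts\<close>

lemma zero_object_exists: "\<exists>Z. zero_object C Z"
  using pre_hilbert unfolding pre_hilbert_def by blast

lemma zero_object_unique_hom:
  assumes "zero_object C Z" "X \<in> Ob C"
  shows "\<exists>!f. f \<in> hom C X Z" "\<exists>!f. f \<in> hom C Z X"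
  using assms unfolding zero_object_def by blast+

lemma zero_mor_eq:
  assumes Z: "zero_object C Z" and u: "u \<in> hom C X Z" and v: "v \<in> hom C Z Y"
  shows "zero_mor C X Y = v \<cdot> u"
  unfolding zero_mor_def
proof (rule the_equality)
  show "\<exists>Z u' v'. zero_object C Z \<and> u' \<in> hom C X Z \<and> v' \<in> hom C Z Y \<and> v \<cdot> u = v' \<cdot> u'"
    using assms by blast
  fix h assume "\<exists>Z' u' v'. zero_object C Z' \<and> u' \<in> hom C X Z' \<and> v' \<in> hom C Z' Y \<and> h = v' \<cdot> u'"
  then obtain Z' u' v' where Z': "zero_object C Z'" and u': "u' \<in> hom C X Z'"
    and v': "v' \<in> hom C Z' Y" and h: "h = v' \<cdot> u'"
    by blast
  obtain p where p: "p \<in> hom C Z Z'"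
    using zero_object_unique_hom(1)[OF Z' hom_obs(2)[OF u]] by blast
  have "u' = p \<cdot> u"
    using zero_object_unique_hom(1)[OF Z' hom_obs(1)[OF u]] u' comp_in_hom[OF u p] by blast
  moreover have "v = v' \<cdot> p"
    using zero_object_unique_hom(2)[OF Z hom_obs(2)[OF v]] v comp_in_hom[OF p v'] by blast
  ultimately show "h = v \<cdot> u"
    using h u p v' by (simp add: in_hom_iff)
qed

lemma zero_mor_in_hom: "X \<in> Ob C \<Longrightarrow> Y \<in> Ob C \<Longrightarrow> zero_mor C X Y \<in> hom C X Y"
  using zero_object_exists zero_object_unique_hom zero_mor_eq comp_in_hom by metis

lemma zero_mor_simps [simp]:
  assumes "X \<in> Ob C" "Y \<in> Ob C"
  shows "zero_mor C X Y \<in> Ar C" "Dom C (zero_mor C X Y) = X" "Cod C (zero_mor C X Y) = Y"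
  using zero_mor_in_hom[OF assms] by (simp_all add: in_hom_iff)

lemma zero_comp [simp]:
  assumes x: "x \<in> Ar C" "Cod C x = Y" and W: "W \<in> Ob C"
  shows "zero_mor C Y W \<cdot> x = zero_mor C (Dom C x) W"
proof -
  obtain Z u v where Z: "zero_object C Z" and u: "u \<in> hom C Y Z" and v: "v \<in> hom C Z W"
    using zero_object_exists zero_object_unique_hom x W by (metis cod_ob)
  have "zero_mor C Y W \<cdot> x = v \<cdot> u \<cdot> x"
    using zero_mor_eq[OF Z u v] x u v by (simp add: in_hom_iff)
  also have "\<dots> = zero_mor C (Dom C x) W"
    using zero_mor_eq[OF Z comp_in_hom[OF arr_in_hom[OF x(1)]] v] u x by simp
  finally show ?thesis .
qed

lemma comp_zero [simp]:
  assumes x: "x \<in> Ar C" "Dom C x = Y" and V: "V \<in> Ob C"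
  shows "x \<cdot> zero_mor C V Y = zero_mor C V (Cod C x)"
proof -
  obtain Z u v where Z: "zero_object C Z" and u: "u \<in> hom C V Z" and v: "v \<in> hom C Z Y"
    using zero_object_exists zero_object_unique_hom x V by (metis dom_ob)
  have "x \<cdot> zero_mor C V Y = (x \<cdot> v) \<cdot> u"
    using zero_mor_eq[OF Z u v] x u v by (simp add: in_hom_iff)
  also have "\<dots> = zero_mor C V (Cod C x)"
    using zero_mor_eq[OF Z u comp_in_hom[OF v]] v x by (simp add: in_hom_iff)
  finally show ?thesis .
qed

lemma star_zero [simp]:
  assumes "X \<in> Ob C" "Y \<in> Ob C"
  shows "(zero_mor C X Y)\<^sup>\<dagger> = zero_mor C Y X"
proof -
  obtain Z u v where Z: "zero_object C Z" and u: "u \<in> hom C X Z" and v: "v \<in> hom C Z Y"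
    using zero_object_exists zero_object_unique_hom assms by metis
  then show ?thesis
    using zero_mor_eq[OF Z u v] zero_mor_eq[OF Z star_in_hom[OF v] star_in_hom[OF u]]
    by (simp add: in_hom_iff)
qed

lemma biproductD:
  assumes "is_biproduct C X1 X2 P s1 r1 s2 r2"
  shows "s1 \<in> hom C X1 P" "r1 \<in> hom C P X1" "s2 \<in> hom C X2 P" "r2 \<in> hom C P X2"
    "r1 \<cdot> s1 = Idm C X1" "r2 \<cdot> s2 = Idm C X2"
    "r2 \<cdot> s1 = zero_mor C X1 X2" "r1 \<cdot> s2 = zero_mor C X2 X1"
    "P \<in> Ob C" "X1 \<in> Ob C" "X2 \<in> Ob C"
proof -
  have "s1 \<in> hom C X1 P \<and> r1 \<in> hom C P X1 \<and> s2 \<in> hom C X2 P \<and> r2 \<in> hom C P X2 \<and>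
      r1 \<cdot> s1 = Idm C X1 \<and> r2 \<cdot> s2 = Idm C X2 \<and>
      r2 \<cdot> s1 = zero_mor C X1 X2 \<and> r1 \<cdot> s2 = zero_mor C X2 X1 \<and> P \<in> Ob C"
    using assms unfolding is_biproduct_def by (elim conjE) (intro conjI)
  then show "s1 \<in> hom C X1 P" "r1 \<in> hom C P X1" "s2 \<in> hom C X2 P" "r2 \<in> hom C P X2"
    "r1 \<cdot> s1 = Idm C X1" "r2 \<cdot> s2 = Idm C X2"
    "r2 \<cdot> s1 = zero_mor C X1 X2" "r1 \<cdot> s2 = zero_mor C X2 X1"
    "P \<in> Ob C" "X1 \<in> Ob C" "X2 \<in> Ob C"
    using hom_obs by blast+
qed

lemma biproduct_pair:
  assumes "is_biproduct C X1 X2 P s1 r1 s2 r2" "g1 \<in> hom C W X1" "g2 \<in> hom C W X2"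
  obtains m where "m \<in> hom C W P" "r1 \<cdot> m = g1" "r2 \<cdot> m = g2"
  using assms hom_obs unfolding is_biproduct_def by metis

lemma biproduct_pair_unique:
  assumes bp: "is_biproduct C X1 X2 P s1 r1 s2 r2" and m: "m \<in> hom C W P" "m' \<in> hom C W P"
    and "r1 \<cdot> m = r1 \<cdot> m'" "r2 \<cdot> m = r2 \<cdot> m'"
  shows "m = m'"
proof -
  have "r1 \<cdot> m \<in> hom C W X1" "r2 \<cdot> m \<in> hom C W X2"
    using m comp_in_hom biproductD(2,4)[OF bp] by blast+
  then show ?thesis
    using bp assms hom_obs unfolding is_biproduct_def by metis
qed

lemma biproduct_copair:
  assumes "is_biproduct C X1 X2 P s1 r1 s2 r2" "g1 \<in> hom C X1 W" "g2 \<in> hom C X2 W"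
  obtains m where "m \<in> hom C P W" "m \<cdot> s1 = g1" "m \<cdot> s2 = g2"
  using assms hom_obs unfolding is_biproduct_def by metis

lemma biproduct_copair_unique:
  assumes bp: "is_biproduct C X1 X2 P s1 r1 s2 r2" and m: "m \<in> hom C P W" "m' \<in> hom C P W"
    and "m \<cdot> s1 = m' \<cdot> s1" "m \<cdot> s2 = m' \<cdot> s2"
  shows "m = m'"
proof -
  have "m \<cdot> s1 \<in> hom C X1 W" "m \<cdot> s2 \<in> hom C X2 W"
    using m comp_in_hom biproductD(1,3)[OF bp] by blast+
  then show ?thesis
    using bp assms hom_obs unfolding is_biproduct_def by metis
qed

lemma biproduct_diagonal:
  assumes "is_biproduct C X X P s1 r1 s2 r2"
  obtains d where "d \<in> hom C X P" "r1 \<cdot> d = Idm C X" "r2 \<cdot> d = Idm C X"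
  using biproduct_pair[OF assms] id_in_hom biproductD(10)[OF assms] by metis

lemma biproduct_codiagonal:
  assumes "is_biproduct C X X P s1 r1 s2 r2"
  obtains n where "n \<in> hom C P X" "n \<cdot> s1 = Idm C X" "n \<cdot> s2 = Idm C X"
  using biproduct_copair[OF assms] id_in_hom biproductD(10)[OF assms] by metis

lemma biproduct_swap:
  assumes "is_biproduct C X1 X2 P s1 r1 s2 r2"
  shows "is_biproduct C X2 X1 P s2 r2 s1 r1"
  using assms unfolding is_biproduct_def by (auto 0 0) metis+

lemma orthonormal_biproduct_exists:
  assumes "X1 \<in> Ob C" "X2 \<in> Ob C"
  obtains P s1 r1 s2 r2 where "is_biproduct C X1 X2 P s1 r1 s2 r2" "r1 = s1\<^sup>\<dagger>" "r2 = s2\<^sup>\<dagger>"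
  using pre_hilbert assms unfolding pre_hilbert_def is_orthonormal_biproduct_def by blast

subsection \<open>Addition of morphisms\<close>

lemma biproduct_comparison:
  assumes bp: "is_biproduct C X1 X2 P s1 r1 s2 r2" and bp': "is_biproduct C X1 X2 P' s1' r1' s2' r2'"
  obtains p where "p \<in> hom C P P'" "r1' \<cdot> p = r1" "r2' \<cdot> p = r2" "p \<cdot> s1 = s1'" "p \<cdot> s2 = s2'"
proof -
  note D = biproductD[OF bp] and D' = biproductD[OF bp']
  obtain p where p: "p \<in> hom C P P'" "r1' \<cdot> p = r1" "r2' \<cdot> p = r2"
    using biproduct_pair[OF bp' D(2,4)] .
  note [simp] = comp_reduce[OF p(2) p(1) D'(2)] comp_reduce[OF p(3) p(1) D'(4)]
  have "p \<cdot> s1 = s1'"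
    by (rule biproduct_pair_unique[OF bp' comp_in_hom[OF D(1) p(1)] D'(1)])
      (use D D' in \<open>simp_all add: in_hom_iff\<close>)
  moreover have "p \<cdot> s2 = s2'"
    by (rule biproduct_pair_unique[OF bp' comp_in_hom[OF D(3) p(1)] D'(3)])
      (use D D' in \<open>simp_all add: in_hom_iff\<close>)
  ultimately show ?thesis
    using that p by blast
qed

lemma mor_sum_via_biproduct:
  assumes bp: "is_biproduct C B B Q j1 q1 j2 q2" and m: "m \<in> hom C A Q" and n: "n \<in> hom C Q B"
    and "n \<cdot> j1 = Idm C B" "n \<cdot> j2 = Idm C B"
  shows "mor_sum C (q1 \<cdot> m) (q2 \<cdot> m) (n \<cdot> m)"
  unfolding mor_sum_def
  using assms biproductD(2,4)[OF bp] hom_obs[OF m] hom_obs[OF n] comp_in_hom[OF m] by blast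

lemma mor_sum_unique:
  assumes "mor_sum C f g h" "mor_sum C f g h'"
  shows "h = h'"
proof -
  obtain A B Q j1 q1 j2 q2 m n where bp: "is_biproduct C B B Q j1 q1 j2 q2"
    and m: "m \<in> hom C A Q" "q1 \<cdot> m = f" "q2 \<cdot> m = g" and f: "f \<in> hom C A B"
    and n: "n \<in> hom C Q B" "n \<cdot> j1 = Idm C B" "n \<cdot> j2 = Idm C B" and h: "h = n \<cdot> m"
    using assms(1) unfolding mor_sum_def by blast
  obtain A' B' Q' j1' q1' j2' q2' m' n' where bp': "is_biproduct C B' B' Q' j1' q1' j2' q2'"
    and m': "m' \<in> hom C A' Q'" "q1' \<cdot> m' = f" "q2' \<cdot> m' = g" and f': "f \<in> hom C A' B'"
    and n': "n' \<in> hom C Q' B'" "n' \<cdot> j1' = Idm C B'" "n' \<cdot> j2' = Idm C B'" and h': "h' = n' \<cdot> m'"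
    using assms(2) unfolding mor_sum_def by blast
  have AB: "A' = A" "B' = B"
    using f f' by (simp_all add: in_hom_iff)
  note bp' = bp'[unfolded AB] and m' = m'[unfolded AB] and n' = n'[unfolded AB]
  note D = biproductD[OF bp] and D' = biproductD[OF bp']
  obtain p where p: "p \<in> hom C Q Q'" "q1' \<cdot> p = q1" "q2' \<cdot> p = q2" "p \<cdot> j1 = j1'" "p \<cdot> j2 = j2'"
    by (rule biproduct_comparison[OF bp bp'])
  have "p \<cdot> m = m'"
    by (rule biproduct_pair_unique[OF bp'])
      (use p m m' D' comp_reduce[OF p(2) p(1)] comp_reduce[OF p(3) p(1)] in
        \<open>auto simp: in_hom_iff\<close>)
  moreover have "n' \<cdot> p = n"
    by (rule biproduct_copair_unique[OF bp])
      (use p n n' D in \<open>auto simp: in_hom_iff\<close>)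
  ultimately show ?thesis
    using h h' m p n' by (auto simp: in_hom_iff)
qed

lemma mor_sum_exists:
  assumes f: "f \<in> hom C A B" and g: "g \<in> hom C A B"
  shows "\<exists>h. mor_sum C f g h"
proof -
  obtain Q j1 q1 j2 q2 where bp: "is_biproduct C B B Q j1 q1 j2 q2"
    using orthonormal_biproduct_exists hom_obs(2)[OF f] by metis
  obtain m where "m \<in> hom C A Q" "q1 \<cdot> m = f" "q2 \<cdot> m = g"
    using biproduct_pair[OF bp f g] .
  moreover obtain n where "n \<in> hom C Q B" "n \<cdot> j1 = Idm C B" "n \<cdot> j2 = Idm C B"
    using biproduct_codiagonal[OF bp] .
  ultimately show ?thesis
    using mor_sum_via_biproduct[OF bp] by metis
qed

definition add (infixl "\<boxplus>" 65) where
  "f \<boxplus> g = (THE h. mor_sum C f g h)"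

lemma mor_sum_iff_add:
  assumes "f \<in> hom C A B" "g \<in> hom C A B"
  shows "mor_sum C f g h \<longleftrightarrow> h = f \<boxplus> g"
proof -
  have "\<exists>!h. mor_sum C f g h"
    using mor_sum_exists[OF assms] mor_sum_unique by blast
  then have "mor_sum C f g (f \<boxplus> g)"
    unfolding add_def by (rule theI')
  then show ?thesis
    using mor_sum_unique by blast
qed

lemma add_via_biproduct:
  assumes bp: "is_biproduct C B B Q j1 q1 j2 q2" and m: "m \<in> hom C A Q" and n: "n \<in> hom C Q B"
    and "n \<cdot> j1 = Idm C B" "n \<cdot> j2 = Idm C B"
  shows "n \<cdot> m = q1 \<cdot> m \<boxplus> q2 \<cdot> m"
  using mor_sum_via_biproduct[OF assms] mor_sum_iff_add comp_in_hom[OF m] biproductD(2,4)[OF bp]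
  by blast

lemma addE:
  assumes f: "f \<in> hom C A B" and g: "g \<in> hom C A B"
  obtains Q j1 q1 j2 q2 m n where "is_biproduct C B B Q j1 q1 j2 q2"
    "m \<in> hom C A Q" "q1 \<cdot> m = f" "q2 \<cdot> m = g"
    "n \<in> hom C Q B" "n \<cdot> j1 = Idm C B" "n \<cdot> j2 = Idm C B" "f \<boxplus> g = n \<cdot> m"
proof -
  have "mor_sum C f g (f \<boxplus> g)"
    using mor_sum_iff_add[OF f g] by blast
  then obtain A' B' Q j1 q1 j2 q2 m n where f': "f \<in> hom C A' B'"
    and "is_biproduct C B' B' Q j1 q1 j2 q2" "m \<in> hom C A' Q" "q1 \<cdot> m = f" "q2 \<cdot> m = g"
      "n \<in> hom C Q B'" "n \<cdot> j1 = Idm C B'" "n \<cdot> j2 = Idm C B'" "f \<boxplus> g = n \<cdot> m"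
    unfolding mor_sum_def by blast
  moreover have "A' = A" "B' = B"
    using f f' by (simp_all add: in_hom_iff)
  ultimately show ?thesis
    using that by blast
qed

lemma add_in_hom:
  assumes f: "f \<in> hom C A B" and g: "g \<in> hom C A B"
  shows "f \<boxplus> g \<in> hom C A B"
  by (rule addE[OF f g]) (metis comp_in_hom)

lemma add_comm:
  assumes f: "f \<in> hom C A B" and g: "g \<in> hom C A B"
  shows "f \<boxplus> g = g \<boxplus> f"
proof -
  obtain Q j1 q1 j2 q2 m n where bp: "is_biproduct C B B Q j1 q1 j2 q2"
    and m: "m \<in> hom C A Q" "q1 \<cdot> m = f" "q2 \<cdot> m = g"
    and n: "n \<in> hom C Q B" "n \<cdot> j1 = Idm C B" "n \<cdot> j2 = Idm C B" and "f \<boxplus> g = n \<cdot> m"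
    by (rule addE[OF f g])
  then show ?thesis
    using add_via_biproduct[OF biproduct_swap[OF bp] m(1) n(1) n(3) n(2)] by simp
qed

lemma add_zero_right [simp]:
  assumes f: "f \<in> hom C A B"
  shows "f \<boxplus> zero_mor C A B = f"
proof -
  obtain Q j1 q1 j2 q2 where bp: "is_biproduct C B B Q j1 q1 j2 q2"
    using orthonormal_biproduct_exists hom_obs(2)[OF f] by metis
  note D = biproductD[OF bp]
  obtain n where n: "n \<in> hom C Q B" "n \<cdot> j1 = Idm C B" "n \<cdot> j2 = Idm C B"
    using biproduct_codiagonal[OF bp] .
  have "n \<cdot> j1 \<cdot> f = q1 \<cdot> j1 \<cdot> f \<boxplus> q2 \<cdot> j1 \<cdot> f"
    by (rule add_via_biproduct[OF bp comp_in_hom[OF f D(1)] n])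
  then show ?thesis
    using f D n comp_reduce[OF n(2) D(1) n(1)] comp_reduce[OF D(5) D(1) D(2)]
      comp_reduce[OF D(7) D(1) D(4)] hom_obs[OF f]
    by (simp add: in_hom_iff)
qed

lemma add_zero_left [simp]:
  assumes "f \<in> hom C A B"
  shows "zero_mor C A B \<boxplus> f = f"
  using assms add_comm[OF zero_mor_in_hom assms] hom_obs[OF assms] by simp

lemma comp_add_right:
  assumes f: "f \<in> hom C A B" and g: "g \<in> hom C A B" and k: "k \<in> hom C A' A"
  shows "(f \<boxplus> g) \<cdot> k = f \<cdot> k \<boxplus> g \<cdot> k"
proof -
  obtain Q j1 q1 j2 q2 m n where bp: "is_biproduct C B B Q j1 q1 j2 q2"
    and m: "m \<in> hom C A Q" "q1 \<cdot> m = f" "q2 \<cdot> m = g"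
    and n: "n \<in> hom C Q B" "n \<cdot> j1 = Idm C B" "n \<cdot> j2 = Idm C B" and fg: "f \<boxplus> g = n \<cdot> m"
    by (rule addE[OF f g])
  note D = biproductD[OF bp]
  have "n \<cdot> m \<cdot> k = q1 \<cdot> m \<cdot> k \<boxplus> q2 \<cdot> m \<cdot> k"
    by (rule add_via_biproduct[OF bp comp_in_hom[OF k m(1)] n])
  then show ?thesis
    using fg k m n comp_reduce[OF m(2) m(1) D(2)] comp_reduce[OF m(3) m(1) D(4)]
    by (simp add: in_hom_iff)
qed

text \<open>The dual of the definition of the sum through the codiagonal; it makes
  distributivity over postcomposition and compatibility with \<open>\<dagger>\<close> immediate.\<close>
lemma add_via_copair:
  assumes bp: "is_biproduct C A A P s1 r1 s2 r2"
    and d: "d \<in> hom C A P" "r1 \<cdot> d = Idm C A" "r2 \<cdot> d = Idm C A"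
    and c: "c \<in> hom C P B" "c \<cdot> s1 = f" "c \<cdot> s2 = g"
  shows "c \<cdot> d = f \<boxplus> g"
proof -
  note D = biproductD[OF bp]
  have f: "f \<in> hom C A B" and g: "g \<in> hom C A B"
    using c comp_in_hom D(1,3) by blast+
  obtain Q j1 q1 j2 q2 where bq: "is_biproduct C B B Q j1 q1 j2 q2"
    using orthonormal_biproduct_exists hom_obs(2)[OF f] by metis
  note E = biproductD[OF bq]
  obtain n where n: "n \<in> hom C Q B" "n \<cdot> j1 = Idm C B" "n \<cdot> j2 = Idm C B"
    using biproduct_codiagonal[OF bq] .
  obtain e where e: "e \<in> hom C P Q" "q1 \<cdot> e = f \<cdot> r1" "q2 \<cdot> e = g \<cdot> r2"
    using biproduct_pair[OF bq comp_in_hom[OF D(2) f] comp_in_hom[OF D(4) g]] .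
  have "q1 \<cdot> e \<cdot> s1 = q1 \<cdot> j1 \<cdot> f" "q2 \<cdot> e \<cdot> s1 = q2 \<cdot> j1 \<cdot> f"
    using comp_reduce[OF e(2) e(1) E(2), of s1] comp_reduce[OF e(3) e(1) E(4), of s1]
      comp_reduce[OF E(5) E(1) E(2), of f] comp_reduce[OF E(7) E(1) E(4), of f] D(1-4,5,7,10) E(10) f g
    by (simp_all add: in_hom_iff)
  then have es1: "e \<cdot> s1 = j1 \<cdot> f"
    using biproduct_pair_unique[OF bq comp_in_hom[OF D(1) e(1)] comp_in_hom[OF f E(1)]] by blast
  have "q1 \<cdot> e \<cdot> s2 = q1 \<cdot> j2 \<cdot> g" "q2 \<cdot> e \<cdot> s2 = q2 \<cdot> j2 \<cdot> g"
    using comp_reduce[OF e(2) e(1) E(2), of s2] comp_reduce[OF e(3) e(1) E(4), of s2]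
      comp_reduce[OF E(8) E(3) E(2), of g] comp_reduce[OF E(6) E(3) E(4), of g] D(1-4,6,8,10) E(10) f g
    by (simp_all add: in_hom_iff)
  then have es2: "e \<cdot> s2 = j2 \<cdot> g"
    using biproduct_pair_unique[OF bq comp_in_hom[OF D(3) e(1)] comp_in_hom[OF g E(3)]] by blast
  have "(n \<cdot> e) \<cdot> s1 = c \<cdot> s1" "(n \<cdot> e) \<cdot> s2 = c \<cdot> s2"
    using es1 es2 comp_reduce[OF n(2) E(1) n(1), of f] comp_reduce[OF n(3) E(3) n(1), of g]
      c n e D f g by (simp_all add: in_hom_iff)
  then have ne: "n \<cdot> e = c"
    using biproduct_copair_unique[OF bp comp_in_hom[OF e(1) n(1)] c(1)] by blast
  have "n \<cdot> e \<cdot> d = q1 \<cdot> e \<cdot> d \<boxplus> q2 \<cdot> e \<cdot> d"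
    by (rule add_via_biproduct[OF bq comp_in_hom[OF d(1) e(1)] n])
  moreover have "q1 \<cdot> e \<cdot> d = f" "q2 \<cdot> e \<cdot> d = g"
    using comp_reduce[OF e(2) e(1) E(2), of d] comp_reduce[OF e(3) e(1) E(4), of d] d D(2,4) f g
    by (simp_all add: in_hom_iff)
  ultimately show ?thesis
    unfolding ne[symmetric] using d e n by (simp add: in_hom_iff)
qed

lemma comp_add_left:
  assumes f: "f \<in> hom C A B" and g: "g \<in> hom C A B" and k: "k \<in> hom C B B'"
  shows "k \<cdot> (f \<boxplus> g) = k \<cdot> f \<boxplus> k \<cdot> g"
proof -
  obtain P s1 r1 s2 r2 where bp: "is_biproduct C A A P s1 r1 s2 r2"
    using orthonormal_biproduct_exists hom_obs(1)[OF f] by metis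
  note D = biproductD[OF bp]
  obtain d where d: "d \<in> hom C A P" "r1 \<cdot> d = Idm C A" "r2 \<cdot> d = Idm C A"
    using biproduct_diagonal[OF bp] .
  obtain c where c: "c \<in> hom C P B" "c \<cdot> s1 = f" "c \<cdot> s2 = g"
    using biproduct_copair[OF bp f g] .
  have "k \<cdot> c \<cdot> d = (k \<cdot> c) \<cdot> d"
    using c d k by (simp add: in_hom_iff)
  also have "\<dots> = k \<cdot> f \<boxplus> k \<cdot> g"
    by (rule add_via_copair[OF bp d comp_in_hom[OF c(1) k]])
      (use c k D in \<open>simp_all add: in_hom_iff\<close>)
  finally show ?thesis
    using add_via_copair[OF bp d c] by simp
qed

lemma add_assoc:
  assumes f: "f \<in> hom C A B" and g: "g \<in> hom C A B" and h: "h \<in> hom C A B"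
  shows "f \<boxplus> g \<boxplus> h = f \<boxplus> (g \<boxplus> h)"
proof -
  obtain P s1 r1 s2 r2 where bp: "is_biproduct C A A P s1 r1 s2 r2"
    using orthonormal_biproduct_exists hom_obs(1)[OF f] by metis
  note D = biproductD[OF bp]
  obtain d where d: "d \<in> hom C A P" "r1 \<cdot> d = Idm C A" "r2 \<cdot> d = Idm C A"
    using biproduct_diagonal[OF bp] .
  obtain c1 where c1: "c1 \<in> hom C P B" "c1 \<cdot> s1 = f" "c1 \<cdot> s2 = g"
    using biproduct_copair[OF bp f g] .
  obtain c2 where c2: "c2 \<in> hom C P B" "c2 \<cdot> s1 = zero_mor C A B" "c2 \<cdot> s2 = h"
    using biproduct_copair[OF bp zero_mor_in_hom h] hom_obs[OF f] by metis
  have "(c1 \<boxplus> c2) \<cdot> d = f \<boxplus> (g \<boxplus> h)"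
    by (rule add_via_copair[OF bp d add_in_hom[OF c1(1) c2(1)]])
      (use c1 c2 f comp_add_right[OF c1(1) c2(1) D(1)] comp_add_right[OF c1(1) c2(1) D(3)] in simp_all)
  moreover have "(c1 \<boxplus> c2) \<cdot> d = f \<boxplus> g \<boxplus> h"
    using comp_add_right[OF c1(1) c2(1) d(1)] add_via_copair[OF bp d c1]
      add_via_copair[OF bp d c2] h by simp
  ultimately show ?thesis
    by simp
qed

lemma star_add:
  assumes f: "f \<in> hom C A B" and g: "g \<in> hom C A B"
  shows "(f \<boxplus> g)\<^sup>\<dagger> = f\<^sup>\<dagger> \<boxplus> g\<^sup>\<dagger>"
proof -
  obtain Q j1 q1 j2 q2 where bq: "is_biproduct C B B Q j1 q1 j2 q2"
    and q: "q1 = j1\<^sup>\<dagger>" "q2 = j2\<^sup>\<dagger>"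
    using orthonormal_biproduct_exists hom_obs(2)[OF f] by metis
  note E = biproductD[OF bq]
  obtain n where n: "n \<in> hom C Q B" "n \<cdot> j1 = Idm C B" "n \<cdot> j2 = Idm C B"
    using biproduct_codiagonal[OF bq] .
  obtain m where m: "m \<in> hom C A Q" "q1 \<cdot> m = f" "q2 \<cdot> m = g"
    using biproduct_pair[OF bq f g] .
  have "f \<boxplus> g = n \<cdot> m"
    using add_via_biproduct[OF bq m(1) n] m by simp
  then have "(f \<boxplus> g)\<^sup>\<dagger> = m\<^sup>\<dagger> \<cdot> n\<^sup>\<dagger>"
    using m n by (simp add: in_hom_iff)
  also have "\<dots> = f\<^sup>\<dagger> \<boxplus> g\<^sup>\<dagger>"
  proof (rule add_via_copair[OF bq star_in_hom[OF n(1)] _ _ star_in_hom[OF m(1)]])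
    have "q1 \<cdot> n\<^sup>\<dagger> = (n \<cdot> j1)\<^sup>\<dagger>" "q2 \<cdot> n\<^sup>\<dagger> = (n \<cdot> j2)\<^sup>\<dagger>"
      using q n(1) E(1,3) by (simp_all add: in_hom_iff)
    then show "q1 \<cdot> n\<^sup>\<dagger> = Idm C B" "q2 \<cdot> n\<^sup>\<dagger> = Idm C B"
      using n E(10) by simp_all
    have "m\<^sup>\<dagger> \<cdot> j1 = (q1 \<cdot> m)\<^sup>\<dagger>" "m\<^sup>\<dagger> \<cdot> j2 = (q2 \<cdot> m)\<^sup>\<dagger>"
      using q m(1) E(1,3) by (simp_all add: in_hom_iff)
    then show "m\<^sup>\<dagger> \<cdot> j1 = f\<^sup>\<dagger>" "m\<^sup>\<dagger> \<cdot> j2 = g\<^sup>\<dagger>"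
      using m by simp_all
  qed
  finally show ?thesis .
qed

subsection \<open>Additive inverses\<close>

lemma kernelD:
  assumes "is_kernel C g k"
  shows "g \<in> Ar C" "k \<in> hom C (Dom C k) (Dom C g)" "g \<cdot> k = zero_mor C (Dom C k) (Cod C g)"
  using assms unfolding is_kernel_def by (auto simp: in_hom_iff)

lemma kernel_universal:
  assumes "is_kernel C g k" "x \<in> hom C X (Dom C g)" "g \<cdot> x = zero_mor C X (Cod C g)"
  shows "\<exists>!h. h \<in> hom C X (Dom C k) \<and> k \<cdot> h = x"
proof -
  have "\<forall>X \<in> Ob C. \<forall>x \<in> hom C X (Dom C g).
      g \<cdot> x = zero_mor C X (Cod C g) \<longrightarrow> (\<exists>!h. h \<in> hom C X (Dom C k) \<and> k \<cdot> h = x)"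
    using assms(1) unfolding is_kernel_def by (elim conjE)
  then show ?thesis
    using assms(2,3) hom_obs(1)[OF assms(2)] by blast
qed

lemma kernel_factor:
  assumes "is_kernel C g k" "x \<in> hom C X (Dom C g)" "g \<cdot> x = zero_mor C X (Cod C g)"
  obtains h where "h \<in> hom C X (Dom C k)" "k \<cdot> h = x"
  using kernel_universal[OF assms] by blast

lemma kernel_cancel:
  assumes k: "is_kernel C g k" and x: "x \<in> hom C X (Dom C k)" and y: "y \<in> hom C X (Dom C k)"
    and xy: "k \<cdot> x = k \<cdot> y"
  shows "x = y"
proof -
  note K = kernelD[OF k]
  have "g \<cdot> k \<cdot> x = zero_mor C (Dom C k) (Cod C g) \<cdot> x"
    using comp_reduce[OF K(3) K(2) arr_in_hom[OF K(1)]] x by (simp add: in_hom_iff)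
  also have "\<dots> = zero_mor C X (Cod C g)"
    using K(1) x by (simp add: in_hom_iff)
  finally have "\<exists>!h. h \<in> hom C X (Dom C k) \<and> k \<cdot> h = k \<cdot> x"
    by (rule kernel_universal[OF k comp_in_hom[OF x K(2)]])
  then show ?thesis
    using x y xy by (metis (no_types, lifting))
qed

lemma kernels_iso:
  assumes m: "is_kernel C g m" and d: "is_kernel C g d"
  obtains u v where "u \<in> hom C (Dom C d) (Dom C m)" "v \<in> hom C (Dom C m) (Dom C d)"
    "m \<cdot> u = d" "d \<cdot> v = m" "u \<cdot> v = Idm C (Dom C m)" "v \<cdot> u = Idm C (Dom C d)"
proof -
  note M = kernelD[OF m] and D = kernelD[OF d]
  obtain u where u: "u \<in> hom C (Dom C d) (Dom C m)" "m \<cdot> u = d"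
    using kernel_factor[OF m D(2)] D(3) M(3) by auto
  obtain v where v: "v \<in> hom C (Dom C m) (Dom C d)" "d \<cdot> v = m"
    using kernel_factor[OF d M(2)] M(3) D(3) by auto
  have "m \<cdot> u \<cdot> v = m \<cdot> Idm C (Dom C m)"
    using comp_reduce[OF u(2) u(1) M(2)] u v M(2) by (simp add: in_hom_iff)
  then have "u \<cdot> v = Idm C (Dom C m)"
    by (rule kernel_cancel[OF m comp_in_hom[OF v(1) u(1)] id_in_hom[OF hom_obs(1)[OF M(2)]]])
  moreover have "d \<cdot> v \<cdot> u = d \<cdot> Idm C (Dom C d)"
    using comp_reduce[OF v(2) v(1) D(2)] u v D(2) by (simp add: in_hom_iff)
  then have "v \<cdot> u = Idm C (Dom C d)"
    by (rule kernel_cancel[OF d comp_in_hom[OF u(1) v(1)] id_in_hom[OF hom_obs(1)[OF D(2)]]])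
  ultimately show ?thesis
    using that u v by blast
qed

lemma isometric_kernel_exists:
  assumes "f \<in> Ar C"
  obtains m where "is_kernel C f m" "m\<^sup>\<dagger> \<cdot> m = Idm C (Dom C m)"
  using pre_hilbert assms unfolding pre_hilbert_def by blast

lemma diagonal_is_kernel:
  assumes "is_biproduct C X X P s1 r1 s2 r2" "r1 = s1\<^sup>\<dagger>" "r2 = s2\<^sup>\<dagger>"
    and "d \<in> hom C X P" "r1 \<cdot> d = Idm C X" "r2 \<cdot> d = Idm C X"
  obtains g where "is_kernel C g d"
  using pre_hilbert assms biproductD(10)[OF assms(1)]
  unfolding pre_hilbert_def is_orthonormal_biproduct_def by blast

text \<open>Both sides say that \<open>e\<close> factors through the diagonal \<open>d\<close>.\<close>
lemma diagonal_kernel_zero_iff: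
  assumes bp: "is_biproduct C Y Y Q t1 p1 t2 p2"
    and d: "d \<in> hom C Y Q" "p1 \<cdot> d = Idm C Y" "p2 \<cdot> d = Idm C Y"
    and g: "is_kernel C g d" and e: "e \<in> hom C P Q"
  shows "g \<cdot> e = zero_mor C P (Cod C g) \<longleftrightarrow> p1 \<cdot> e = p2 \<cdot> e"
proof
  note D = biproductD[OF bp] and K = kernelD[OF g]
  have Dg: "Dom C g = Q" and gh: "g \<in> hom C Q (Cod C g)"
    using K d by (simp_all add: in_hom_iff)
  have Dd: "Dom C d = Y"
    using d by (simp add: in_hom_iff)
  show "p1 \<cdot> e = p2 \<cdot> e" if ge: "g \<cdot> e = zero_mor C P (Cod C g)"
  proof -
    obtain w where w: "w \<in> hom C P Y" "d \<cdot> w = e"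
      by (rule kernel_factor[OF g e[folded Dg] ge, unfolded Dd])
    have "p1 \<cdot> d \<cdot> w = w" "p2 \<cdot> d \<cdot> w = w"
      using comp_reduce[OF d(2) d(1) D(2), of w] comp_reduce[OF d(3) d(1) D(4), of w] w(1)
      by (simp_all add: in_hom_iff)
    then show ?thesis
      using w(2) by simp
  qed
  show "g \<cdot> e = zero_mor C P (Cod C g)" if pe: "p1 \<cdot> e = p2 \<cdot> e"
  proof -
    have p1e: "p1 \<cdot> e \<in> hom C P Y"
      using comp_in_hom[OF e D(2)] .
    have "p1 \<cdot> d \<cdot> p1 \<cdot> e = p1 \<cdot> e" "p2 \<cdot> d \<cdot> p1 \<cdot> e = p1 \<cdot> e"
      using comp_reduce[OF d(2) d(1) D(2), of "p1 \<cdot> e"] comp_reduce[OF d(3) d(1) D(4), of "p1 \<cdot> e"] p1e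
      by (simp_all add: in_hom_iff)
    then have "d \<cdot> p1 \<cdot> e = e"
      using biproduct_pair_unique[OF bp comp_in_hom[OF p1e d(1)] e] pe by simp
    moreover have "g \<cdot> d \<cdot> p1 \<cdot> e = zero_mor C P (Cod C g)"
      using comp_reduce[OF K(3) d(1) gh, of "p1 \<cdot> e"] p1e K(1) Dd by (simp add: in_hom_iff)
    ultimately show ?thesis
      by simp
  qed
qed

lemma zero_if_vanishes_on_range_and_complement:
  assumes m: "m \<in> hom C K P" and n: "is_kernel C (m\<^sup>\<dagger>) n" "n\<^sup>\<dagger> \<cdot> n = Idm C (Dom C n)"
    and G: "G \<in> hom C P Z" and Gm: "G \<cdot> m = zero_mor C K Z" and Gn: "G \<cdot> n = zero_mor C (Dom C n) Z"
  shows "G = zero_mor C P Z"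
proof -
  note N = kernelD[OF n(1)]
  have K: "K \<in> Ob C" and P: "P \<in> Ob C" and Z: "Z \<in> Ob C"
    using m G hom_obs by blast+
  have nh: "n \<in> hom C (Dom C n) P"
    using N(2) m by (simp add: in_hom_iff)
  have "m\<^sup>\<dagger> \<cdot> G\<^sup>\<dagger> = (G \<cdot> m)\<^sup>\<dagger>"
    using m G by (simp add: in_hom_iff)
  then have "m\<^sup>\<dagger> \<cdot> G\<^sup>\<dagger> = zero_mor C Z (Cod C (m\<^sup>\<dagger>))"
    using Gm K Z m by (simp add: in_hom_iff)
  then obtain t where t: "t \<in> hom C Z (Dom C n)" "n \<cdot> t = G\<^sup>\<dagger>"
    using kernel_factor[OF n(1)] star_in_hom[OF G] m by (metis in_hom_iff star_simps(2))
  have "t = n\<^sup>\<dagger> \<cdot> n \<cdot> t"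
    using comp_reduce[OF n(2) nh star_in_hom[OF nh], of t] t(1) by (simp add: in_hom_iff)
  also have "\<dots> = (G \<cdot> n)\<^sup>\<dagger>"
    using t nh G by (simp add: in_hom_iff)
  also have "\<dots> = zero_mor C Z (Dom C n)"
    using Gn Z nh by (simp add: in_hom_iff)
  finally have "G\<^sup>\<dagger> = zero_mor C Z P"
    using t nh Z by (simp add: in_hom_iff)
  then show ?thesis
    using G P Z star_star[of G] by (simp add: in_hom_iff)
qed

lemma eq_if_agree_on_range_and_complement:
  assumes m: "m \<in> hom C K P" and n: "is_kernel C (m\<^sup>\<dagger>) n" "n\<^sup>\<dagger> \<cdot> n = Idm C (Dom C n)"
    and h: "h1 \<in> hom C P Y" "h2 \<in> hom C P Y" and hm: "h1 \<cdot> m = h2 \<cdot> m" and hn: "h1 \<cdot> n = h2 \<cdot> n"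
  shows "h1 = h2"
proof -
  obtain Q t1 p1 t2 p2 where bq: "is_biproduct C Y Y Q t1 p1 t2 p2" "p1 = t1\<^sup>\<dagger>" "p2 = t2\<^sup>\<dagger>"
    using orthonormal_biproduct_exists hom_obs(2)[OF h(1)] by metis
  note E = biproductD[OF bq(1)]
  obtain d where d: "d \<in> hom C Y Q" "p1 \<cdot> d = Idm C Y" "p2 \<cdot> d = Idm C Y"
    using biproduct_diagonal[OF bq(1)] .
  obtain g where g: "is_kernel C g d"
    using diagonal_is_kernel[OF bq d] .
  note zero_iff = diagonal_kernel_zero_iff[OF bq(1) d g]
  have gh: "g \<in> hom C Q (Cod C g)"
    using kernelD[OF g] d by (simp add: in_hom_iff)
  obtain e where e: "e \<in> hom C P Q" "p1 \<cdot> e = h1" "p2 \<cdot> e = h2"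
    using biproduct_pair[OF bq(1) h] .
  have nh: "n \<in> hom C (Dom C n) P"
    using kernelD(2)[OF n(1)] m by (simp add: in_hom_iff)
  have "g \<cdot> e \<cdot> m = zero_mor C K (Cod C g)" "g \<cdot> e \<cdot> n = zero_mor C (Dom C n) (Cod C g)"
    using zero_iff[OF comp_in_hom[OF m e(1)]] zero_iff[OF comp_in_hom[OF nh e(1)]] hm hn
      comp_reduce[OF e(2) e(1) E(2)] comp_reduce[OF e(3) e(1) E(4)] m nh
    by (simp_all add: in_hom_iff)
  then have "g \<cdot> e = zero_mor C P (Cod C g)"
    using zero_if_vanishes_on_range_and_complement[OF m n comp_in_hom[OF e(1) gh]] m nh e gh
    by (simp add: in_hom_iff)
  then show ?thesis
    using zero_iff[OF e(1)] e by simp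
qed

lemma range_projection_add_complement:
  assumes m: "m \<in> hom C K P" "m\<^sup>\<dagger> \<cdot> m = Idm C K"
    and n: "is_kernel C (m\<^sup>\<dagger>) n" "n\<^sup>\<dagger> \<cdot> n = Idm C (Dom C n)"
  shows "m \<cdot> m\<^sup>\<dagger> \<boxplus> n \<cdot> n\<^sup>\<dagger> = Idm C P"
proof -
  define N where "N = Dom C n"
  have K: "K \<in> Ob C" and N: "N \<in> Ob C" and P: "P \<in> Ob C"
    using m(1) kernelD(2)[OF n(1)] hom_obs unfolding N_def by blast+
  have nh: "n \<in> hom C N P"
    using kernelD(2)[OF n(1)] m(1) unfolding N_def by (simp add: in_hom_iff)
  have mn: "m\<^sup>\<dagger> \<cdot> n = zero_mor C N K"
    using kernelD(3)[OF n(1)] m(1) unfolding N_def by (simp add: in_hom_iff)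
  have nm: "n\<^sup>\<dagger> \<cdot> m = zero_mor C K N"
    using arg_cong[OF mn, of "Star C"] m(1) nh K N by (simp add: in_hom_iff)
  have mm: "m \<cdot> m\<^sup>\<dagger> \<in> hom C P P" and nn: "n \<cdot> n\<^sup>\<dagger> \<in> hom C P P"
    using m(1) nh by (simp_all add: in_hom_iff)
  show ?thesis
  proof (rule eq_if_agree_on_range_and_complement[OF m(1) n add_in_hom[OF mm nn] id_in_hom[OF P]])
    show "(m \<cdot> m\<^sup>\<dagger> \<boxplus> n \<cdot> n\<^sup>\<dagger>) \<cdot> m = Idm C P \<cdot> m"
      using comp_add_right[OF mm nn m(1)] m nh nm K N by (simp add: in_hom_iff)
    show "(m \<cdot> m\<^sup>\<dagger> \<boxplus> n \<cdot> n\<^sup>\<dagger>) \<cdot> n = Idm C P \<cdot> n"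
      using comp_add_right[OF mm nn nh] m nh n(2) mn K N unfolding N_def[symmetric]
      by (simp add: in_hom_iff)
  qed
qed

lemma diagonal_iso_isometry:
  assumes bp: "is_biproduct C X X P s1 r1 s2 r2" "r1 = s1\<^sup>\<dagger>" "r2 = s2\<^sup>\<dagger>"
    and d: "d \<in> hom C X P" "r1 \<cdot> d = Idm C X" "r2 \<cdot> d = Idm C X"
  obtains K m u v where "m \<in> hom C K P" "m\<^sup>\<dagger> \<cdot> m = Idm C K" "d \<cdot> v = m"
    "u \<in> hom C X K" "v \<in> hom C K X" "u \<cdot> v = Idm C K" "v \<cdot> u = Idm C X"
proof -
  obtain g where g: "is_kernel C g d"
    using diagonal_is_kernel[OF bp d] .
  obtain m where m: "is_kernel C g m" "m\<^sup>\<dagger> \<cdot> m = Idm C (Dom C m)"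
    using isometric_kernel_exists[OF kernelD(1)[OF g]] .
  obtain u v where "u \<in> hom C (Dom C d) (Dom C m)" "v \<in> hom C (Dom C m) (Dom C d)"
    "d \<cdot> v = m" "u \<cdot> v = Idm C (Dom C m)" "v \<cdot> u = Idm C (Dom C d)"
    using kernels_iso[OF m(1) g] by metis
  moreover have "Dom C d = X" "m \<in> hom C (Dom C m) P"
    using kernelD(2)[OF m(1)] kernelD(2)[OF g] d(1) by (simp_all add: in_hom_iff)
  ultimately show ?thesis
    using that m(2) by simp
qed

text \<open>With \<open>m = d v\<close> the isometric copy of the diagonal \<open>d\<close>, the off-diagonal entry of
  \<open>m m\<^sup>\<dagger> + n n\<^sup>\<dagger> = 1\<close> reads \<open>0 = v v\<^sup>\<dagger> + E\<close>; multiplying by \<open>(v v\<^sup>\<dagger>)\<^sup>-\<^sup>1 = u\<^sup>\<dagger> u\<close>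
  gives \<open>0 = 1 + E u\<^sup>\<dagger> u\<close>.\<close>
lemma minus_one_exists:
  assumes X: "X \<in> Ob C"
  obtains e where "e \<in> hom C X X" "Idm C X \<boxplus> e = zero_mor C X X"
proof -
  obtain P s1 r1 s2 r2 where bp: "is_biproduct C X X P s1 r1 s2 r2" "r1 = s1\<^sup>\<dagger>" "r2 = s2\<^sup>\<dagger>"
    using orthonormal_biproduct_exists[OF X X] by metis
  note D = biproductD[OF bp(1)]
  obtain d where d: "d \<in> hom C X P" "r1 \<cdot> d = Idm C X" "r2 \<cdot> d = Idm C X"
    using biproduct_diagonal[OF bp(1)] .
  obtain K m u v where m: "m \<in> hom C K P" "m\<^sup>\<dagger> \<cdot> m = Idm C K" "d \<cdot> v = m"
    and uv: "u \<in> hom C X K" "v \<in> hom C K X" "u \<cdot> v = Idm C K" "v \<cdot> u = Idm C X"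
    by (rule diagonal_iso_isometry[OF bp d])
  obtain n where n: "is_kernel C (m\<^sup>\<dagger>) n" "n\<^sup>\<dagger> \<cdot> n = Idm C (Dom C n)"
    using isometric_kernel_exists m(1) by (metis in_hom_iff star_simps(1))
  have nh: "n \<in> hom C (Dom C n) P"
    using kernelD(2)[OF n(1)] m(1) by (simp add: in_hom_iff)
  define E where "E = r1 \<cdot> n \<cdot> n\<^sup>\<dagger> \<cdot> s2"
  have E: "E \<in> hom C X X"
    unfolding E_def using D nh by (simp add: in_hom_iff)
  have r1m: "r1 \<cdot> m = v" and r2m: "r2 \<cdot> m = v"
    using comp_reduce[OF d(2) d(1) D(2), of v] comp_reduce[OF d(3) d(1) D(4), of v] m(3) uv(2)
    by (simp_all add: in_hom_iff)
  have "m\<^sup>\<dagger> \<cdot> s2 = v\<^sup>\<dagger>"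
    using arg_cong[OF r2m, of "Star C"] bp(3) m(1) D(3) by (simp add: in_hom_iff)
  then have "r1 \<cdot> m \<cdot> m\<^sup>\<dagger> \<cdot> s2 = v \<cdot> v\<^sup>\<dagger>"
    using comp_reduce[OF r1m m(1) D(2), of "m\<^sup>\<dagger> \<cdot> s2"] m(1) D(3) uv(2) by (simp add: in_hom_iff)
  moreover have "r1 \<cdot> (m \<cdot> m\<^sup>\<dagger> \<boxplus> n \<cdot> n\<^sup>\<dagger>) \<cdot> s2 = r1 \<cdot> m \<cdot> m\<^sup>\<dagger> \<cdot> s2 \<boxplus> E"
    using comp_add_right[of "m \<cdot> m\<^sup>\<dagger>" P P "n \<cdot> n\<^sup>\<dagger>" s2 X] comp_add_left[OF _ _ D(2)] m(1) nh D(3)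
    unfolding E_def by (simp add: in_hom_iff)
  ultimately have vE: "v \<cdot> v\<^sup>\<dagger> \<boxplus> E = zero_mor C X X"
    using range_projection_add_complement[OF m(1,2) n] D(2,3,8,9) by (simp add: in_hom_iff)
  have vu: "v\<^sup>\<dagger> \<cdot> u\<^sup>\<dagger> = Idm C K"
    using arg_cong[OF uv(3), of "Star C"] uv(1,2) hom_obs(2)[OF uv(1)] by (simp add: in_hom_iff)
  have "(v \<cdot> v\<^sup>\<dagger>) \<cdot> u\<^sup>\<dagger> \<cdot> u = v \<cdot> (v\<^sup>\<dagger> \<cdot> u\<^sup>\<dagger>) \<cdot> u"
    using uv(1,2) by (simp add: in_hom_iff)
  also have "\<dots> = Idm C X"
    using vu uv by (simp add: in_hom_iff)
  finally have vvuu: "(v \<cdot> v\<^sup>\<dagger>) \<cdot> u\<^sup>\<dagger> \<cdot> u = Idm C X" .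
  have "Idm C X \<boxplus> E \<cdot> u\<^sup>\<dagger> \<cdot> u = zero_mor C X X"
    using arg_cong[OF vE, of "\<lambda>x. x \<cdot> u\<^sup>\<dagger> \<cdot> u"] comp_add_right[OF _ E, of "v \<cdot> v\<^sup>\<dagger>" "u\<^sup>\<dagger> \<cdot> u"]
      vvuu uv(1,2) X by (simp add: in_hom_iff)
  then show ?thesis
    by (rule that[OF comp_in_hom[OF comp_in_hom[OF uv(1) star_in_hom[OF uv(1)]] E]])
qed

lemma add_inverse_exists:
  assumes f: "f \<in> hom C A B"
  shows "\<exists>f'. f' \<in> hom C A B \<and> f \<boxplus> f' = zero_mor C A B"
proof -
  have A: "A \<in> Ob C" and B: "B \<in> Ob C"
    using hom_obs[OF f] by blast+
  obtain e where e: "e \<in> hom C B B" "Idm C B \<boxplus> e = zero_mor C B B"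
    using minus_one_exists[OF B] .
  have "f \<boxplus> e \<cdot> f = (Idm C B \<boxplus> e) \<cdot> f"
    using comp_add_right[OF id_in_hom[OF B] e(1) f] f by (simp add: in_hom_iff)
  also have "\<dots> = zero_mor C A B"
    using e(2) f A B by (simp add: in_hom_iff)
  finally show ?thesis
    using comp_in_hom[OF f e(1)] by blast
qed

definition neg ("\<boxminus> _" [81] 80) where
  "\<boxminus> f = (SOME f'. f' \<in> hom C (Dom C f) (Cod C f) \<and> f \<boxplus> f' = zero_mor C (Dom C f) (Cod C f))"

lemma neg_in_hom: "f \<in> hom C A B \<Longrightarrow> \<boxminus> f \<in> hom C A B"
  and add_neg_right: "f \<in> hom C A B \<Longrightarrow> f \<boxplus> \<boxminus> f = zero_mor C A B"
proof -
  assume f: "f \<in> hom C A B"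
  then have "f \<in> hom C (Dom C f) (Cod C f)"
    by (simp add: in_hom_iff)
  then have "\<boxminus> f \<in> hom C (Dom C f) (Cod C f) \<and> f \<boxplus> \<boxminus> f = zero_mor C (Dom C f) (Cod C f)"
    unfolding neg_def by (rule someI_ex[OF add_inverse_exists])
  then show "\<boxminus> f \<in> hom C A B" "f \<boxplus> \<boxminus> f = zero_mor C A B"
    using f by (simp_all add: in_hom_iff)
qed

lemma add_neg_left: "f \<in> hom C A B \<Longrightarrow> \<boxminus> f \<boxplus> f = zero_mor C A B"
  using add_comm[OF neg_in_hom] add_neg_right by metis

lemma add_left_cancel:
  assumes f: "f \<in> hom C A B" and x: "x \<in> hom C A B" and y: "y \<in> hom C A B"
    and "f \<boxplus> x = f \<boxplus> y"
  shows "x = y"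
proof -
  have "x = \<boxminus> f \<boxplus> f \<boxplus> x"
    using add_neg_left[OF f] x by simp
  also have "\<dots> = \<boxminus> f \<boxplus> f \<boxplus> y"
    using assms add_assoc[OF neg_in_hom[OF f] f] by simp
  also have "\<dots> = y"
    using add_neg_left[OF f] y by simp
  finally show ?thesis .
qed

lemma neg_unique:
  assumes "f \<in> hom C A B" "g \<in> hom C A B" "f \<boxplus> g = zero_mor C A B"
  shows "\<boxminus> f = g"
  using add_left_cancel[OF assms(1) neg_in_hom assms(2)] add_neg_right assms by metis

lemma comp_neg_left:
  assumes f: "f \<in> hom C A B" and k: "k \<in> hom C B B'"
  shows "k \<cdot> \<boxminus> f = \<boxminus> (k \<cdot> f)"
proof -
  have "k \<cdot> f \<boxplus> k \<cdot> \<boxminus> f = zero_mor C A B'"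
    using comp_add_left[OF f neg_in_hom[OF f] k] add_neg_right[OF f] k hom_obs(1)[OF f]
    by (simp add: in_hom_iff)
  then show ?thesis
    using neg_unique comp_in_hom[OF f k] comp_in_hom[OF neg_in_hom[OF f] k] by metis
qed

lemma comp_neg_right:
  assumes f: "f \<in> hom C A B" and k: "k \<in> hom C A' A"
  shows "\<boxminus> f \<cdot> k = \<boxminus> (f \<cdot> k)"
proof -
  have "f \<cdot> k \<boxplus> \<boxminus> f \<cdot> k = zero_mor C A' B"
    using comp_add_right[OF f neg_in_hom[OF f] k] add_neg_right[OF f] k hom_obs(2)[OF f]
    by (simp add: in_hom_iff)
  then show ?thesis
    using neg_unique comp_in_hom[OF k f] comp_in_hom[OF k neg_in_hom[OF f]] by metis
qed

lemma star_neg: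
  assumes f: "f \<in> hom C A B"
  shows "(\<boxminus> f)\<^sup>\<dagger> = \<boxminus> (f\<^sup>\<dagger>)"
proof -
  have "f\<^sup>\<dagger> \<boxplus> (\<boxminus> f)\<^sup>\<dagger> = zero_mor C B A"
    using star_add[OF f neg_in_hom[OF f]] add_neg_right[OF f] hom_obs[OF f] by simp
  then show ?thesis
    using neg_unique star_in_hom[OF f] star_in_hom[OF neg_in_hom[OF f]] by metis
qed

lemma add_neg_cancel_left:
  assumes "f \<in> hom C A B" "g \<in> hom C A B"
  shows "f \<boxplus> (g \<boxplus> \<boxminus> f) = g"
  using add_assoc[OF assms(1) neg_in_hom assms(2), symmetric] add_comm[OF neg_in_hom assms(2)]
    add_neg_right assms by (simp add: add_neg_right)

lemma neg_zero [simp]: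
  assumes "A \<in> Ob C" "B \<in> Ob C"
  shows "\<boxminus> zero_mor C A B = zero_mor C A B"
  using neg_unique[OF zero_mor_in_hom[OF assms] zero_mor_in_hom[OF assms]]
    add_zero_right[OF zero_mor_in_hom[OF assms]] by simp

subsection \<open>The order on Hermitian morphisms\<close>

lemma hermitian_iff:
  assumes "c \<in> hom C A A"
  shows "hermitian C c \<longleftrightarrow> c\<^sup>\<dagger> = c"
  using assms hom_obs(1)[OF assms] unfolding hermitian_def by blast

lemma herm_le_iff:
  assumes c: "c \<in> hom C A A" and d: "d \<in> hom C A A"
  shows "herm_le C c d \<longleftrightarrow>
    c\<^sup>\<dagger> = c \<and> d\<^sup>\<dagger> = d \<and> (\<exists>Y \<in> Ob C. \<exists>y \<in> hom C A Y. d = c \<boxplus> y\<^sup>\<dagger> \<cdot> y)"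
proof -
  have "mor_sum C c (y\<^sup>\<dagger> \<cdot> y) d \<longleftrightarrow> d = c \<boxplus> y\<^sup>\<dagger> \<cdot> y" if "y \<in> hom C A Y" for y Y
    using mor_sum_iff_add[OF c comp_in_hom[OF that star_in_hom[OF that]]] .
  moreover have "Dom C c = A" "Dom C d = A"
    using c d by (simp_all add: in_hom_iff)
  ultimately show ?thesis
    unfolding herm_le_def hermitian_iff[OF c] hermitian_iff[OF d] by auto
qed

lemma herm_less_iff:
  assumes c: "c \<in> hom C A A" and d: "d \<in> hom C A A"
  shows "herm_less C c d \<longleftrightarrow> herm_le C c d \<and> (\<exists>e \<in> hom C A A. d = c \<boxplus> e \<and> invertible C e)"
proof -
  have "mor_sum C c e d \<longleftrightarrow> e \<in> hom C A A \<and> d = c \<boxplus> e" for e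
  proof
    assume s: "mor_sum C c e d"
    then obtain A' B' where "c \<in> hom C A' B'" "e \<in> hom C A' B'"
      unfolding mor_sum_def by blast
    then have "e \<in> hom C A A"
      using c by (auto simp: in_hom_iff)
    then show "e \<in> hom C A A \<and> d = c \<boxplus> e"
      using s mor_sum_iff_add[OF c] by blast
  qed (use mor_sum_iff_add[OF c] in blast)
  then show ?thesis
    unfolding herm_less_def by blast
qed

lemma invertibleE:
  assumes "e \<in> hom C A B" "invertible C e"
  obtains g where "g \<in> hom C B A" "g \<cdot> e = Idm C A" "e \<cdot> g = Idm C B"
  using assms unfolding invertible_def by (auto simp: in_hom_iff)

lemma inverse_mor_eq:
  assumes e: "e \<in> hom C A B" and g: "g \<in> hom C B A"
    and ge: "g \<cdot> e = Idm C A" and eg: "e \<cdot> g = Idm C B"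
  shows "inverse_mor C e = g"
  unfolding inverse_mor_def
proof (rule the_equality)
  show "\<exists>A B. e \<in> hom C A B \<and> g \<in> hom C B A \<and> g \<cdot> e = Idm C A \<and> e \<cdot> g = Idm C B"
    using assms by blast
  fix g' assume "\<exists>A' B'. e \<in> hom C A' B' \<and> g' \<in> hom C B' A' \<and> g' \<cdot> e = Idm C A' \<and> e \<cdot> g' = Idm C B'"
  then have g': "g' \<in> hom C B A" "g' \<cdot> e = Idm C A"
    using e by (auto simp: in_hom_iff)
  have "g' = g' \<cdot> e \<cdot> g"
    using eg g' by (simp add: in_hom_iff)
  also have "\<dots> = g"
    using comp_reduce[OF g'(2) e g'(1)] g by (simp add: in_hom_iff)
  finally show "g' = g" .
qed

lemma positive_definiteD:
  assumes a: "a \<in> hom C A A" and pos: "herm_less C (zero_mor C A A) a"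
  shows "a\<^sup>\<dagger> = a" "inverse_mor C a \<in> hom C A A"
    "inverse_mor C a \<cdot> a = Idm C A" "a \<cdot> inverse_mor C a = Idm C A"
proof -
  have z: "zero_mor C A A \<in> hom C A A"
    using zero_mor_in_hom hom_obs[OF a] by blast
  show "a\<^sup>\<dagger> = a"
    using pos unfolding herm_less_iff[OF z a] herm_le_iff[OF z a] by blast
  obtain g where "g \<in> hom C A A" "g \<cdot> a = Idm C A" "a \<cdot> g = Idm C A"
    using pos invertibleE unfolding herm_less_iff[OF z a] by (metis add_zero_left)
  moreover from this have "inverse_mor C a = g"
    using inverse_mor_eq[OF a] by blast
  ultimately show "inverse_mor C a \<in> hom C A A"
    "inverse_mor C a \<cdot> a = Idm C A" "a \<cdot> inverse_mor C a = Idm C A"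
    by simp_all
qed

lemma positive_definite_square:
  assumes a: "a \<in> hom C A A" and pos: "herm_less C (zero_mor C A A) a"
  obtains W w where "w \<in> hom C A W" "w\<^sup>\<dagger> \<cdot> w = a"
proof -
  have z: "zero_mor C A A \<in> hom C A A"
    using zero_mor_in_hom hom_obs[OF a] by blast
  then show ?thesis
    using that pos unfolding herm_less_iff[OF z a] herm_le_iff[OF z a]
    by (metis add_zero_left comp_in_hom star_in_hom)
qed

lemma hermitian_right_inverse:
  assumes e: "e \<in> hom C A A" "e\<^sup>\<dagger> = e" and x: "x \<in> hom C A A" "e \<cdot> x = Idm C A"
  shows "x\<^sup>\<dagger> = x" and "x \<cdot> e = Idm C A"
proof -
  have xe: "x\<^sup>\<dagger> \<cdot> e = Idm C A"
    using arg_cong[OF x(2), of "Star C"] e x(1) hom_obs[OF e(1)] by (simp add: in_hom_iff)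
  have "x\<^sup>\<dagger> = x\<^sup>\<dagger> \<cdot> e \<cdot> x"
    using x star_in_hom[OF x(1)] by (simp add: in_hom_iff)
  also have "\<dots> = x"
    using comp_reduce[OF xe e(1) star_in_hom[OF x(1)]] x(1) by (simp add: in_hom_iff)
  finally show "x\<^sup>\<dagger> = x" .
  then show "x \<cdot> e = Idm C A"
    using xe by simp
qed

lemma biproduct_sum_components:
  assumes bp: "is_biproduct C X1 X2 P s1 r1 s2 r2" and x: "x \<in> hom C A X1" and y: "y \<in> hom C A X2"
  shows "r1 \<cdot> (s1 \<cdot> x \<boxplus> s2 \<cdot> y) = x" and "r2 \<cdot> (s1 \<cdot> x \<boxplus> s2 \<cdot> y) = y"
proof -
  note D = biproductD[OF bp]
  have sx: "s1 \<cdot> x \<in> hom C A P" and sy: "s2 \<cdot> y \<in> hom C A P"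
    using comp_in_hom D(1,3) x y by blast+
  have A: "A \<in> Ob C"
    using hom_obs[OF x] by blast
  show "r1 \<cdot> (s1 \<cdot> x \<boxplus> s2 \<cdot> y) = x"
    using comp_add_left[OF sx sy D(2)] comp_reduce[OF D(5) D(1,2), of x]
      comp_reduce[OF D(8) D(3,2), of y] x y A D(10,11) by (simp add: in_hom_iff)
  show "r2 \<cdot> (s1 \<cdot> x \<boxplus> s2 \<cdot> y) = y"
    using comp_add_left[OF sx sy D(4)] comp_reduce[OF D(7) D(1,4), of x]
      comp_reduce[OF D(6) D(3,4), of y] x y A D(10,11) by (simp add: in_hom_iff)
qed

lemma orthonormal_biproduct_gram:
  assumes bp: "is_biproduct C X1 X2 P s1 r1 s2 r2" "r1 = s1\<^sup>\<dagger>" "r2 = s2\<^sup>\<dagger>"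
    and x: "x \<in> hom C A X1" and y: "y \<in> hom C A X2"
  shows "(s1 \<cdot> x \<boxplus> s2 \<cdot> y)\<^sup>\<dagger> \<cdot> (s1 \<cdot> x \<boxplus> s2 \<cdot> y) = x\<^sup>\<dagger> \<cdot> x \<boxplus> y\<^sup>\<dagger> \<cdot> y"
proof -
  note D = biproductD[OF bp(1)]
  define z where "z = s1 \<cdot> x \<boxplus> s2 \<cdot> y"
  have sx: "s1 \<cdot> x \<in> hom C A P" and sy: "s2 \<cdot> y \<in> hom C A P"
    using comp_in_hom D(1,3) x y by blast+
  have z: "z \<in> hom C A P"
    unfolding z_def using add_in_hom[OF sx sy] .
  have "z\<^sup>\<dagger> \<cdot> s1 = (r1 \<cdot> z)\<^sup>\<dagger>" "z\<^sup>\<dagger> \<cdot> s2 = (r2 \<cdot> z)\<^sup>\<dagger>"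
    using bp(2,3) z D(1,3) by (simp_all add: in_hom_iff)
  then have "z\<^sup>\<dagger> \<cdot> s1 = x\<^sup>\<dagger>" "z\<^sup>\<dagger> \<cdot> s2 = y\<^sup>\<dagger>"
    using biproduct_sum_components[OF bp(1) x y] unfolding z_def by simp_all
  then show ?thesis
    using comp_add_left[OF sx sy star_in_hom[OF z]] comp_reduce[of "z\<^sup>\<dagger>" s1] comp_reduce[of "z\<^sup>\<dagger>" s2]
      D(1,3) x y z unfolding z_def[symmetric] by (simp add: in_hom_iff)
qed

lemma gram_realization:
  assumes f: "f \<in> hom C A B" and y: "y \<in> hom C A Y" and w: "w \<in> hom C B W"
    and bi: "bi \<in> hom C B B" "bi\<^sup>\<dagger> = bi" "(w\<^sup>\<dagger> \<cdot> w) \<cdot> bi = Idm C B"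
  obtains P Z1 Z2 where "Z1 \<in> hom C A P" "Z2 \<in> hom C B P"
    "Z1\<^sup>\<dagger> \<cdot> Z1 = f\<^sup>\<dagger> \<cdot> bi \<cdot> f \<boxplus> y\<^sup>\<dagger> \<cdot> y" "Z2\<^sup>\<dagger> \<cdot> Z2 = w\<^sup>\<dagger> \<cdot> w" "Z2\<^sup>\<dagger> \<cdot> Z1 = f"
proof -
  obtain P s1 r1 s2 r2 where bp: "is_biproduct C Y W P s1 r1 s2 r2" "r1 = s1\<^sup>\<dagger>" "r2 = s2\<^sup>\<dagger>"
    using orthonormal_biproduct_exists hom_obs(2)[OF y] hom_obs(2)[OF w] by metis
  note D = biproductD[OF bp(1)]
  define x where "x = w \<cdot> bi \<cdot> f"
  have x: "x \<in> hom C A W"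
    unfolding x_def using w bi(1) f by (simp add: in_hom_iff)
  define Z1 where "Z1 = s1 \<cdot> y \<boxplus> s2 \<cdot> x"
  have Z1: "Z1 \<in> hom C A P"
    unfolding Z1_def using add_in_hom comp_in_hom D(1,3) x y by metis
  have Z2: "s2 \<cdot> w \<in> hom C B P"
    using comp_in_hom[OF w D(3)] .
  have wwbi: "w\<^sup>\<dagger> \<cdot> w \<cdot> bi \<cdot> f = f"
    using comp_reduce[OF bi(3) bi(1) comp_in_hom[OF w star_in_hom[OF w]], of f] w bi(1) f
    by (simp add: in_hom_iff)
  have "Z1\<^sup>\<dagger> \<cdot> Z1 = y\<^sup>\<dagger> \<cdot> y \<boxplus> x\<^sup>\<dagger> \<cdot> x"
    unfolding Z1_def by (rule orthonormal_biproduct_gram[OF bp y x])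
  also have "\<dots> = x\<^sup>\<dagger> \<cdot> x \<boxplus> y\<^sup>\<dagger> \<cdot> y"
    using add_comm comp_in_hom star_in_hom x y by metis
  also have "x\<^sup>\<dagger> \<cdot> x = f\<^sup>\<dagger> \<cdot> bi \<cdot> f"
    unfolding x_def using wwbi bi w f by (simp add: in_hom_iff)
  finally have "Z1\<^sup>\<dagger> \<cdot> Z1 = f\<^sup>\<dagger> \<cdot> bi \<cdot> f \<boxplus> y\<^sup>\<dagger> \<cdot> y" .
  moreover have "(s2 \<cdot> w)\<^sup>\<dagger> \<cdot> s2 \<cdot> w = w\<^sup>\<dagger> \<cdot> w"
    using comp_reduce[OF D(6)[unfolded bp(3)] D(3) star_in_hom[OF D(3)], of w] bp(3) w D(3)
    by (simp add: in_hom_iff)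
  moreover have "(s2 \<cdot> w)\<^sup>\<dagger> \<cdot> Z1 = w\<^sup>\<dagger> \<cdot> r2 \<cdot> Z1"
    using bp(3) w D(3) Z1 by (simp add: in_hom_iff)
  then have "(s2 \<cdot> w)\<^sup>\<dagger> \<cdot> Z1 = f"
    using biproduct_sum_components(2)[OF bp(1) y x] wwbi unfolding Z1_def x_def by simp
  ultimately show ?thesis
    by (rule that[OF Z1 Z2])
qed

text \<open>The witness is \<open>z = Z2 - Z1 ai f\<^sup>\<dagger>\<close>.\<close>
lemma schur_complement_gram:
  assumes Z1: "Z1 \<in> hom C A P" and Z2: "Z2 \<in> hom C B P"
    and ai: "ai \<in> hom C A A" "ai\<^sup>\<dagger> = ai" "ai \<cdot> Z1\<^sup>\<dagger> \<cdot> Z1 = Idm C A"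
  defines "f \<equiv> Z2\<^sup>\<dagger> \<cdot> Z1"
  shows "\<exists>z \<in> hom C B P. Z2\<^sup>\<dagger> \<cdot> Z2 = f \<cdot> ai \<cdot> f\<^sup>\<dagger> \<boxplus> z\<^sup>\<dagger> \<cdot> z"
proof -
  define t where "t = Z1 \<cdot> ai \<cdot> f\<^sup>\<dagger>"
  define d where "d = f \<cdot> ai \<cdot> f\<^sup>\<dagger>"
  have f: "f \<in> hom C A B"
    unfolding f_def using Z1 Z2 by (simp add: in_hom_iff)
  have t: "t \<in> hom C B P" and d: "d \<in> hom C B B"
    unfolding t_def d_def using Z1 ai(1) f by (simp_all add: in_hom_iff)
  have b: "Z2\<^sup>\<dagger> \<cdot> Z2 \<in> hom C B B"
    using Z2 by (simp add: in_hom_iff)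
  have "Z2\<^sup>\<dagger> \<cdot> t = d"
    unfolding t_def d_def f_def using Z1 Z2 ai(1) by (simp add: in_hom_iff)
  moreover have "t\<^sup>\<dagger> \<cdot> Z2 = d"
    unfolding t_def d_def f_def using Z1 Z2 ai by (simp add: in_hom_iff)
  moreover have "t\<^sup>\<dagger> \<cdot> t = d"
    unfolding t_def d_def using comp_reduce[OF ai(3) comp_in_hom[OF Z1 star_in_hom[OF Z1]] ai(1), of "ai \<cdot> f\<^sup>\<dagger>"]
      Z1 ai f by (simp add: in_hom_iff)
  ultimately have "(Z2\<^sup>\<dagger> \<boxplus> \<boxminus> t\<^sup>\<dagger>) \<cdot> Z2 = Z2\<^sup>\<dagger> \<cdot> Z2 \<boxplus> \<boxminus> d"
    and "(Z2\<^sup>\<dagger> \<boxplus> \<boxminus> t\<^sup>\<dagger>) \<cdot> t = zero_mor C B B"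
    using comp_add_right[OF star_in_hom[OF Z2] neg_in_hom[OF star_in_hom[OF t]] Z2]
      comp_add_right[OF star_in_hom[OF Z2] neg_in_hom[OF star_in_hom[OF t]] t]
      comp_neg_right[OF star_in_hom[OF t]] add_neg_right[OF d] Z2 t
    by simp_all
  moreover have "(Z2 \<boxplus> \<boxminus> t)\<^sup>\<dagger> = Z2\<^sup>\<dagger> \<boxplus> \<boxminus> t\<^sup>\<dagger>"
    using star_add[OF Z2 neg_in_hom[OF t]] star_neg[OF t] by simp
  ultimately have "(Z2 \<boxplus> \<boxminus> t)\<^sup>\<dagger> \<cdot> (Z2 \<boxplus> \<boxminus> t) = Z2\<^sup>\<dagger> \<cdot> Z2 \<boxplus> \<boxminus> d"
    using comp_add_left[OF Z2 neg_in_hom[OF t] add_in_hom[OF star_in_hom[OF Z2] neg_in_hom[OF star_in_hom[OF t]]]]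
      comp_neg_left[OF t add_in_hom[OF star_in_hom[OF Z2] neg_in_hom[OF star_in_hom[OF t]]]]
      add_in_hom[OF b neg_in_hom[OF d]] hom_obs[OF d]
    by simp
  then show ?thesis
    using add_neg_cancel_left[OF d b] add_in_hom[OF Z2 neg_in_hom[OF t]] unfolding d_def by metis
qed

lemma add_neg_cancel_right:
  assumes "f \<in> hom C A B" "g \<in> hom C A B"
  shows "g \<boxplus> f \<boxplus> \<boxminus> f = g"
  using add_assoc[OF assms(2,1) neg_in_hom[OF assms(1)]] add_neg_right[OF assms(1)] assms(2) by simp

lemma resolvent_identity:
  assumes c: "c \<in> hom C A A" and p: "p \<in> hom C A A" "pi \<in> hom C A A" "p \<cdot> pi = Idm C A"
    and ai: "ai \<in> hom C A A" "ai \<cdot> (c \<boxplus> p) = Idm C A"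
  shows "pi = ai \<cdot> c \<cdot> pi \<boxplus> ai"
proof -
  have A: "A \<in> Ob C"
    using hom_obs[OF c] by blast
  have "pi = ai \<cdot> (c \<boxplus> p) \<cdot> pi"
    using comp_reduce[OF ai(2) add_in_hom[OF c p(1)] ai(1), of pi] p(2) by (simp add: in_hom_iff)
  also have "\<dots> = ai \<cdot> (c \<cdot> pi \<boxplus> Idm C A)"
    using comp_add_right[OF c p(1,2)] p(3) by simp
  also have "\<dots> = ai \<cdot> c \<cdot> pi \<boxplus> ai"
    using comp_add_left[OF comp_in_hom[OF p(2) c] id_in_hom[OF A] ai(1)] ai(1) by (simp add: in_hom_iff)
  finally show ?thesis .
qed

lemma woodbury_right_inverse:
  assumes f: "f \<in> hom C A B" and b: "b \<in> hom C B B" "bi \<in> hom C B B" "b \<cdot> bi = Idm C B"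
    and p: "p \<in> hom C A A" "pi \<in> hom C A A" "p \<cdot> pi = Idm C A"
    and ai: "ai \<in> hom C A A" "ai \<cdot> (f\<^sup>\<dagger> \<cdot> bi \<cdot> f \<boxplus> p) = Idm C A"
  shows "(b \<boxplus> \<boxminus> (f \<cdot> ai \<cdot> f\<^sup>\<dagger>)) \<cdot> (bi \<boxplus> bi \<cdot> f \<cdot> pi \<cdot> f\<^sup>\<dagger> \<cdot> bi) = Idm C B"
proof -
  define g where "g = f\<^sup>\<dagger> \<cdot> bi"
  define d where "d = f \<cdot> ai \<cdot> f\<^sup>\<dagger>"
  define U where "U = f \<cdot> ai \<cdot> g"
  define V where "V = f \<cdot> ai \<cdot> f\<^sup>\<dagger> \<cdot> bi \<cdot> f \<cdot> pi \<cdot> g"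
  have B: "B \<in> Ob C"
    using hom_obs[OF b(1)] by blast
  have c: "f\<^sup>\<dagger> \<cdot> bi \<cdot> f \<in> hom C A A" and g: "g \<in> hom C B A" and d: "d \<in> hom C B B"
    and U: "U \<in> hom C B B" and V: "V \<in> hom C B B" and k: "bi \<cdot> f \<cdot> pi \<cdot> g \<in> hom C B B"
    unfolding g_def d_def U_def V_def using f b p ai by (simp_all add: in_hom_iff)
  note hom = f b p ai c g d U V k
  have "f \<cdot> pi \<cdot> g = f \<cdot> (ai \<cdot> (f\<^sup>\<dagger> \<cdot> bi \<cdot> f) \<cdot> pi \<boxplus> ai) \<cdot> g"
    using resolvent_identity[OF c p ai] by (rule arg_cong)
  also have "\<dots> = V \<boxplus> U"
  proof -
    have X: "ai \<cdot> (f\<^sup>\<dagger> \<cdot> bi \<cdot> f) \<cdot> pi \<in> hom C A A"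
      using hom by (simp add: in_hom_iff)
    show ?thesis
      using comp_add_right[OF X ai(1) g] comp_add_left[OF comp_in_hom[OF g X] comp_in_hom[OF g ai(1)] f] hom
      unfolding U_def V_def by (simp add: in_hom_iff)
  qed
  finally have fpig: "f \<cdot> pi \<cdot> g = U \<boxplus> V"
    using add_comm[OF V U] by simp
  have "(b \<boxplus> \<boxminus> d) \<cdot> bi = Idm C B \<boxplus> \<boxminus> U"
    using comp_add_right[OF b(1) neg_in_hom[OF d] b(2)] comp_neg_right[OF d b(2)] hom b(3)
    unfolding d_def U_def g_def by (simp add: in_hom_iff)
  moreover have "(b \<boxplus> \<boxminus> d) \<cdot> bi \<cdot> f \<cdot> pi \<cdot> g = U"
  proof -
    have "b \<cdot> bi \<cdot> f \<cdot> pi \<cdot> g = f \<cdot> pi \<cdot> g"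
      using comp_reduce[OF b(3) b(2,1), of "f \<cdot> pi \<cdot> g"] hom by (simp add: in_hom_iff)
    then show ?thesis
      using comp_add_right[OF b(1) neg_in_hom[OF d] k] comp_neg_right[OF d k] fpig
        add_neg_cancel_right[OF V U] hom
      unfolding d_def V_def by (simp add: in_hom_iff)
  qed
  ultimately show ?thesis
    using comp_add_left[OF b(2) k add_in_hom[OF b(1) neg_in_hom[OF d]]]
      add_assoc[OF id_in_hom[OF B] neg_in_hom[OF U] U] add_neg_left[OF U] B
    unfolding d_def g_def by (simp add: in_hom_iff)
qed

lemma herm_le_transfer:
  assumes f: "f \<in> hom C A B" and a: "a \<in> hom C A A" and b: "b \<in> hom C B B"
    and pa: "herm_less C (zero_mor C A A) a" and pb: "herm_less C (zero_mor C B B) b"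
    and le: "herm_le C (f\<^sup>\<dagger> \<cdot> inverse_mor C b \<cdot> f) a"
  shows "herm_le C (f \<cdot> inverse_mor C a \<cdot> f\<^sup>\<dagger>) b"
proof -
  note ha = positive_definiteD(1)[OF a pa] and ai = positive_definiteD(2-4)[OF a pa]
  note hb = positive_definiteD(1)[OF b pb] and bi = positive_definiteD(2,4)[OF b pb]
  obtain W w where w: "w \<in> hom C B W" "w\<^sup>\<dagger> \<cdot> w = b"
    using positive_definite_square[OF b pb] .
  have hai: "(inverse_mor C a)\<^sup>\<dagger> = inverse_mor C a" and hbi: "(inverse_mor C b)\<^sup>\<dagger> = inverse_mor C b"
    using hermitian_right_inverse(1)[OF a ha ai(1,3)] hermitian_right_inverse(1)[OF b hb bi] .
  have c: "f\<^sup>\<dagger> \<cdot> inverse_mor C b \<cdot> f \<in> hom C A A" and d: "f \<cdot> inverse_mor C a \<cdot> f\<^sup>\<dagger> \<in> hom C B B"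
    using f ai(1) bi(1) by (simp_all add: in_hom_iff)
  obtain Y y where y: "y \<in> hom C A Y" "a = f\<^sup>\<dagger> \<cdot> inverse_mor C b \<cdot> f \<boxplus> y\<^sup>\<dagger> \<cdot> y"
    using le unfolding herm_le_iff[OF c a] by blast
  obtain P Z1 Z2 where Z: "Z1 \<in> hom C A P" "Z2 \<in> hom C B P"
    "Z1\<^sup>\<dagger> \<cdot> Z1 = a" "Z2\<^sup>\<dagger> \<cdot> Z2 = b" "Z2\<^sup>\<dagger> \<cdot> Z1 = f"
    using gram_realization[OF f y(1) w(1) bi(1) hbi] w(2) bi(2) y(2) by metis
  obtain z where "z \<in> hom C B P" "b = f \<cdot> inverse_mor C a \<cdot> f\<^sup>\<dagger> \<boxplus> z\<^sup>\<dagger> \<cdot> z"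
    using schur_complement_gram[OF Z(1,2) ai(1) hai] Z(3-5) ai(2) by auto
  moreover have "(f \<cdot> inverse_mor C a \<cdot> f\<^sup>\<dagger>)\<^sup>\<dagger> = f \<cdot> inverse_mor C a \<cdot> f\<^sup>\<dagger>"
    using f ai(1) hai by (simp add: in_hom_iff)
  ultimately show ?thesis
    unfolding herm_le_iff[OF d b] using hb hom_obs(2) by blast
qed

lemma herm_less_transfer:
  assumes f: "f \<in> hom C A B" and a: "a \<in> hom C A A" and b: "b \<in> hom C B B"
    and pa: "herm_less C (zero_mor C A A) a" and pb: "herm_less C (zero_mor C B B) b"
    and less: "herm_less C (f\<^sup>\<dagger> \<cdot> inverse_mor C b \<cdot> f) a"
  shows "herm_less C (f \<cdot> inverse_mor C a \<cdot> f\<^sup>\<dagger>) b"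
proof -
  note ai = positive_definiteD(2,3)[OF a pa]
  note hb = positive_definiteD(1)[OF b pb] and bi = positive_definiteD(2,4)[OF b pb]
  define d where "d = f \<cdot> inverse_mor C a \<cdot> f\<^sup>\<dagger>"
  have c: "f\<^sup>\<dagger> \<cdot> inverse_mor C b \<cdot> f \<in> hom C A A" and d: "d \<in> hom C B B"
    unfolding d_def using f ai(1) bi(1) by (simp_all add: in_hom_iff)
  have le: "herm_le C d b"
    unfolding d_def using herm_le_transfer[OF f a b pa pb] less herm_less_iff[OF c a] by blast
  obtain p where p: "p \<in> hom C A A" "a = f\<^sup>\<dagger> \<cdot> inverse_mor C b \<cdot> f \<boxplus> p" "invertible C p"
    using less unfolding herm_less_iff[OF c a] by blast
  obtain pi where pi: "pi \<in> hom C A A" "p \<cdot> pi = Idm C A"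
    using invertibleE[OF p(1,3)] by metis
  define e where "e = b \<boxplus> \<boxminus> d"
  define x where "x = inverse_mor C b \<boxplus> inverse_mor C b \<cdot> f \<cdot> pi \<cdot> f\<^sup>\<dagger> \<cdot> inverse_mor C b"
  have e: "e \<in> hom C B B" and x: "x \<in> hom C B B"
    unfolding e_def x_def using add_in_hom neg_in_hom b d bi(1) f pi(1)
    by (simp_all add: in_hom_iff)
  have ex: "e \<cdot> x = Idm C B"
    unfolding e_def x_def d_def
    using woodbury_right_inverse[OF f b bi p(1) pi ai(1)] ai(2) p(2) by simp
  have "d\<^sup>\<dagger> = d"
    using le unfolding herm_le_iff[OF d b] by blast
  then have "e\<^sup>\<dagger> = e"
    unfolding e_def using star_add[OF b neg_in_hom[OF d]] star_neg[OF d] hb by simp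
  then have "invertible C e"
    unfolding invertible_def using e x ex hermitian_right_inverse[OF e _ x ex] by blast
  moreover have "b = d \<boxplus> e"
    unfolding e_def using add_neg_cancel_left[OF d b] by simp
  ultimately have "herm_less C d b"
    unfolding herm_less_iff[OF d b] using le e by blast
  then show ?thesis
    unfolding d_def .
qed

end

theorem proposition6p2:
  fixes C :: "('o, 'm) starcat" and A B :: 'o and f a b :: 'm
  assumes "pre_hilbert C"
    and "A \<in> Ob C" and "B \<in> Ob C"
    and "f \<in> hom C A B" and "a \<in> hom C A A" and "b \<in> hom C B B"
    and "herm_less C (zero_mor C A A) a"
    and "herm_less C (zero_mor C B B) b"
  shows "(herm_le C (Cmp C (Star C f) (Cmp C (inverse_mor C b) f)) a \<longleftrightarrow>
          herm_le C (Cmp C f (Cmp C (inverse_mor C a) (Star C f))) b) \<and>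
         (herm_less C (Cmp C (Star C f) (Cmp C (inverse_mor C b) f)) a \<longleftrightarrow>
          herm_less C (Cmp C f (Cmp C (inverse_mor C a) (Star C f))) b)"
proof -
  interpret pre_hilbert_category C
    by unfold_locales (rule assms(1))
  note f = assms(4) and pos = assms(5-8)
  have f': "f\<^sup>\<dagger> \<in> hom C B A" and ff: "f\<^sup>\<dagger>\<^sup>\<dagger> = f"
    using star_in_hom[OF f] f by (simp_all add: in_hom_iff)
  show ?thesis
    using herm_le_transfer[OF f pos] herm_le_transfer[OF f' pos(2,1,4,3)]
      herm_less_transfer[OF f pos] herm_less_transfer[OF f' pos(2,1,4,3)]
    unfolding ff by blast
qed

end
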